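(* Let $f:\mathcal{D}\to\mathbb{R}$ be real-analytic and $\tau(f)$-strongly convex on the open set $\mathcal{D}\subseteq\mathbb{R}^n$, satisfying the holomorphic extension assumption for some $\bar\delta\in(0,1)$, and let $\mathcal{K}\subset\mathcal{D}$ be compact and convex. Suppose $f$ has Lipschitz Hessian on $\mathcal{K}$ with a nonzero constant $L_2(f)$. Let $\{x_k\}_{k\ge1}$ be generated by Algorithm (b) (projected, onto $\mathcal{K}$, with $x_1\in\mathcal{K}$) with stepsizes $\mu_k=2/(\tau(f)k)$ and smoothing parameters $\delta_k=\delta k^{-1/6}$, where $\delta\in(0,\kappa\bar\delta]$ for some $\kappa\in(0,1)$, and suppose the oracle is the stochastic complex oracle with noise second moment bound $\sigma_\xi$ and independent noise. Let $x^\star$ be the minimizer of $f$ over $\mathcal{K}$ and $\bar x_K=K^{-1}\sum_{k=1}^K x_k$. Then $$\mathbb{E}[f(\bar x_K)-f(x^\star)]\le\widetilde O\!\left(\frac{n^2}{\tau(f)}\,\delta^{-1/3}\sigma_\xi\,K^{-2/3}\right),$$ where $\widetilde O$ hides factors polylogarithmic in $K$ and constants independent of $K$.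
   Context: Standing setup. $\mathcal{D}\subseteq\mathbb{R}^n$ open, $f:\mathcal{D}\to\mathbb{R}$ real-analytic. Holomorphic extension assumption: $f$ admits a holomorphic extension to $\{x+iy: x\in\mathcal{D}, y\in(-\bar\delta,\bar\delta)^n\}\subset\mathbb{C}^n$ for some $\bar\delta\in(0,1)$. Stochastic complex oracle: on query $z$ in that set it returns $\Im(f(z))+\xi$, where $\xi$ is a real random variable with $\mathbb{E}[\xi]=0$, $\mathbb{E}[\xi^2]\le\sigma_\xi$ ($\sigma_\xi>0$); the noise is drawn independently of the random directions $u_k$ (fresh noise at each query). Algorithm 1: given $x_1\in\mathcal{X}$, stepsizes $\{\mu_k\}$ and smoothing parameters $\{\delta_k\}$, for $k=1,\dots,K$: draw $u_k$ uniformly on $\mathbb{S}^{n-1}$ (independently), set $g_{\delta_k}(x_k)=\frac{n}{\delta_k}\Im(f(x_k+i\delta_ku_k))u_k+\frac{n}{\delta_k}\xi_ku_k$ (the oracle output times $\frac{n}{\delta_k}u_k$), and $x_{k+1}=\Pi_{\mathcal{X}}(x_k-\mu_kg_{\delta_k}(x_k))$. Variant (a): $\mathcal{X}=\mathcal{D}$ (no projection); variant (b): $\mathcal{X}=\mathcal{K}\subset\mathcal{D}$ with $\Pi_{\mathcal{K}}$ the Euclidean projection onto $\mathcal{K}$. $f$ is $\tau(f)$-strongly convex if $f(y)\ge f(x)+\langle\nabla f(x),y-x\rangle+\tfrac12\tau(f)\|y-x\|_2^2$ for all $x,y\in\mathcal{D}$. Lipschitz Hessian with constant $L_2(f)$: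 $\|\nabla^2f(x)-\nabla^2f(y)\|_2\le L_2(f)\|x-y\|_2$. Expectations are over all randomness (directions and noise). *)

theory Defs
  imports "HOL-Probability.Probability"
begin

definition cvec :: "real^'n \<Rightarrow> real^'n \<Rightarrow> complex^'n" where
  "cvec x y = (\<chi> j. Complex (x $ j) (y $ j))"

text \<open>Holomorphy of a function of several complex variables on a set S:
  complex (Frechet) differentiability, i.e. the real derivative exists and is
  complex-linear (commutes with multiplication by the imaginary unit).\<close>
definition holomorphic_vec_on :: "(complex^'n \<Rightarrow> complex) \<Rightarrow> (complex^'n) set \<Rightarrow> bool" where
  "holomorphic_vec_on F S \<longleftrightarrow>
     (\<forall>z\<in>S. \<exists>F'. (F has_derivative F') (at z) \<and>
                  (\<forall>v. F' (\<chi> j. \<i> * v $ j) = \<i> * F' v))"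

definition strip :: "(real^'n) set \<Rightarrow> real \<Rightarrow> (complex^'n) set" where
  "strip D d = {cvec x y | x y. x \<in> D \<and> (\<forall>j. \<bar>y $ j\<bar> < d)}"

text \<open>Real-analyticity in several variables: locally given by an (absolutely,
  i.e. unconditionally) convergent multivariate power series.\<close>
definition real_analytic_vec_on :: "(real^'n \<Rightarrow> real) \<Rightarrow> (real^'n) set \<Rightarrow> bool" where
  "real_analytic_vec_on f D \<longleftrightarrow>
     (\<forall>x\<in>D. \<exists>r>0. \<exists>c :: ('n \<Rightarrow> nat) \<Rightarrow> real.
        \<forall>y\<in>ball x r. ((\<lambda>\<alpha>. c \<alpha> * (\<Prod>j\<in>UNIV. (y $ j - x $ j) ^ \<alpha> j)) has_sum f y) UNIV)"

definition grad :: "(real^'n \<Rightarrow> real) \<Rightarrow> real^'n \<Rightarrow> real^'n" where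
  "grad f x = (\<chi> i. frechet_derivative f (at x) (axis i 1))"

definition hessian :: "(real^'n \<Rightarrow> real) \<Rightarrow> real^'n \<Rightarrow> real^'n^'n" where
  "hessian f x = (\<chi> i j. frechet_derivative (\<lambda>y. grad f y $ i) (at x) (axis j 1))"

definition mat_norm2 :: "real^'n^'m \<Rightarrow> real" where
  "mat_norm2 A = onorm (\<lambda>v. A *v v)"

definition strongly_convex_on :: "(real^'n) set \<Rightarrow> real \<Rightarrow> (real^'n \<Rightarrow> real) \<Rightarrow> bool" where
  "strongly_convex_on D tau f \<longleftrightarrow> (\<forall>x\<in>D. \<forall>y\<in>D.
      f y \<ge> f x + grad f x \<bullet> (y - x) + tau / 2 * (norm (y - x))\<^sup>2)"

text \<open>Uniform distribution on the unit sphere S^{n-1}: the normalized cone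
  measure, i.e. the radial projection of the uniform distribution on the unit ball.\<close>
definition uniform_sphere :: "(real^'n) measure" where
  "uniform_sphere = distr (uniform_measure lborel (ball 0 1)) borel (\<lambda>x. x /\<^sub>R norm x)"

end

theory Submission
  imports Defs "HOL-Complex_Analysis.Complex_Analysis"
begin

text \<open>For f real on the reals, the second-order Taylor term of its holomorphic extension along
  x + i d u is real, so Im F(x + i d u) = d (grad f(x) \<bullet> u) + O(d^3). Since E[u u^T] = I/n for u
  uniform on the sphere, the complex-step estimator (n/d) Im F(x + i d u) u has mean
  grad f(x) + O(n d^2), while the oracle noise makes its second moment O(n^2/d^2). The usual analysis
  of projected SGD with stepsize 2/(tau k) for a tau-strongly convex objective then gives, with
  a_k = E |x_k - x*|^2,
    E[f(x_k) - f(x*)] \<le> tau/4 ((k - 1) a_k - k a_(k+1)) + O(n^2 d_k^4 / tau + n^2 / (tau d_k^2 k)),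
  and for d_k = delta k^(-1/6) both error terms are O(k^(-2/3)). Summing over k the distance terms
  telescope, and Jensen's inequality turns the sum into an O(K^(-2/3)) bound for the averaged
  iterate, without logarithmic factors.\<close>

no_notation fps_nth (infixl "$" 75)

section \<open>The uniform distribution on the sphere\<close>

lemma prod_Basis_vec: "(\<Prod>b\<in>(Basis :: (real^'n) set). h b) = (\<Prod>i\<in>UNIV. h (axis i 1))"
proof -
  have B: "(Basis :: (real^'n) set) = range (\<lambda>i. axis i 1)" by (auto simp: Basis_vec_def)
  have "inj (\<lambda>i::'n. axis i (1::real))" by (auto simp: inj_on_def axis_eq_axis)
  then show ?thesis unfolding B by (simp add: prod.reindex)
qed

definition signed_perm :: "('n \<Rightarrow> 'n) \<Rightarrow> ('n \<Rightarrow> real) \<Rightarrow> real^'n \<Rightarrow> real^'n" where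
  "signed_perm p s x = (\<chi> k. s k * x $ p k)"

definition signs :: "('n \<Rightarrow> real) \<Rightarrow> bool" where
  "signs s \<longleftrightarrow> (\<forall>k. s k = 1 \<or> s k = -1)"

lemma linear_signed_perm: "linear (signed_perm p s)"
  by (rule linearI) (simp_all add: signed_perm_def vec_eq_iff algebra_simps)

lemma borel_measurable_signed_perm[measurable]: "signed_perm p s \<in> borel_measurable borel"
  by (intro borel_measurable_continuous_onI linear_continuous_on linear_conv_bounded_linear[THEN iffD1]
      linear_signed_perm)

lemma norm_signed_perm:
  assumes "bij p" "signs s"
  shows "norm (signed_perm p s x) = norm x"
proof -
  have "signed_perm p s x \<bullet> signed_perm p s x = (\<Sum>k\<in>UNIV. x $ p k * x $ p k)"
    using assms(2) unfolding signs_def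
    by (auto simp: signed_perm_def inner_vec_def intro!: sum.cong) (metis mult_1 mult_minus1 minus_mult_minus)
  also have "\<dots> = x \<bullet> x"
    using sum.reindex_bij_betw[of p UNIV UNIV "\<lambda>k. x $ k * x $ k"] assms(1) by (simp add: inner_vec_def)
  finally show ?thesis by (simp add: norm_eq_sqrt_inner)
qed

lemma sign_mult_bounds_iff:
  "s = 1 \<or> s = -1 \<Longrightarrow> ((a::real) < s * x \<and> s * x < b) \<longleftrightarrow>
     ((if s = 1 then a else -b) < x \<and> x < (if s = 1 then b else -a))"
  by auto

lemma distr_lborel_signed_perm:
  fixes p :: "'n::finite \<Rightarrow> 'n"
  assumes p: "bij p" and s: "signs s"
  shows "distr lborel borel (signed_perm p s) = lborel"
proof (rule lborel_eqI[symmetric])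
  fix l u :: "real^'n"
  assume lu: "\<And>b. b \<in> Basis \<Longrightarrow> l \<bullet> b \<le> u \<bullet> b"
  have le: "l $ i \<le> u $ i" for i
    using lu[of "axis i 1"] by (simp add: inner_axis axis_in_Basis_iff)
  define q where "q = inv p"
  have pq: "p (q j) = j" and qp: "q (p j) = j" for j
    using p by (simp_all add: q_def bij_is_surj surj_f_inv_f bij_is_inj inv_f_f)
  define l' :: "real^'n" where "l' = (\<chi> j. if s (q j) = 1 then l $ q j else - u $ q j)"
  define u' :: "real^'n" where "u' = (\<chi> j. if s (q j) = 1 then u $ q j else - l $ q j)"
  have "signed_perm p s -` box l u = box l' u'"
  proof (rule set_eqI)
    fix x :: "real^'n"
    have "x \<in> signed_perm p s -` box l u \<longleftrightarrow> (\<forall>k. l $ k < s k * x $ p k \<and> s k * x $ p k < u $ k)"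
      by (simp add: signed_perm_def mem_box_cart)
    also have "\<dots> \<longleftrightarrow> (\<forall>j. l $ q j < s (q j) * x $ j \<and> s (q j) * x $ j < u $ q j)"
      by (metis pq qp)
    also have "\<dots> \<longleftrightarrow> x \<in> box l' u'"
      unfolding mem_box_cart l'_def u'_def using sign_mult_bounds_iff s by (simp add: signs_def)
    finally show "x \<in> signed_perm p s -` box l u \<longleftrightarrow> x \<in> box l' u'" .
  qed
  then have "emeasure (distr lborel borel (signed_perm p s)) (box l u) = emeasure lborel (box l' u')"
    by (simp add: emeasure_distr)
  also have "\<dots> = ennreal (\<Prod>j\<in>UNIV. u' $ j - l' $ j)"
  proof -
    have "\<And>b. b \<in> Basis \<Longrightarrow> l' \<bullet> b \<le> u' \<bullet> b"
      using le s by (auto simp: Basis_vec_def inner_axis l'_def u'_def signs_def)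
    then show ?thesis by (simp add: emeasure_lborel_box prod_Basis_vec inner_axis inner_diff_left)
  qed
  also have "(\<Prod>j\<in>UNIV. u' $ j - l' $ j) = (\<Prod>j\<in>UNIV. u $ q j - l $ q j)"
    using s by (intro prod.cong) (auto simp: l'_def u'_def signs_def)
  also have "\<dots> = (\<Prod>j\<in>UNIV. u $ j - l $ j)"
    using prod.reindex_bij_betw[of q UNIV UNIV "\<lambda>j. u $ j - l $ j"] p
    by (simp add: q_def bij_imp_bij_inv)
  finally show "emeasure (distr lborel borel (signed_perm p s)) (box l u) = ennreal (prod ((\<bullet>) (u - l)) Basis)"
    by (simp add: prod_Basis_vec inner_axis inner_diff_left)
qed simp

abbreviation uniform_ball :: "(real^'n) measure" where
  "uniform_ball \<equiv> uniform_measure lborel (ball 0 1)"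

lemma prob_space_uniform_ball: "prob_space (uniform_ball :: (real^'n) measure)"
proof (rule prob_space_uniform_measure)
  have "unit_ball_vol (real CARD('n)) \<noteq> 0"
    by (rule not_sym, rule less_imp_neq, rule unit_ball_vol_pos) simp
  then show "emeasure lborel (ball (0::real^'n) 1) \<noteq> 0" by (simp add: emeasure_ball)
qed (use emeasure_lborel_ball_finite[of "0::real^'n" 1] in simp)

lemma measurable_uniform_ball[simp]: "measurable (uniform_ball :: (real^'n) measure) N = measurable borel N"
  by (rule measurable_cong_sets) auto

lemma measurable_uniform_sphere[simp]: "measurable (uniform_sphere :: (real^'n) measure) N = measurable borel N"
  by (rule measurable_cong_sets) (auto simp: uniform_sphere_def)

lemma space_uniform_sphere[simp]: "space (uniform_sphere :: (real^'n) measure) = UNIV"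
  by (simp add: uniform_sphere_def)

lemma prob_space_uniform_sphere: "prob_space (uniform_sphere :: (real^'n) measure)"
  unfolding uniform_sphere_def by (rule prob_space.prob_space_distr[OF prob_space_uniform_ball]) simp

lemma measure_uniform_sphere_UNIV[simp]: "measure (uniform_sphere :: (real^'n) measure) UNIV = 1"
  using prob_space.prob_space[OF prob_space_uniform_sphere] by simp

lemma AE_uniform_sphere_norm: "AE y in (uniform_sphere :: (real^'n) measure). norm y = 1"
proof -
  have "AE x in (uniform_ball :: (real^'n) measure). x \<noteq> 0"
    by (rule AE_uniform_measureI) (auto intro: AE_mp[OF AE_lborel_singleton[of 0]])
  then show ?thesis unfolding uniform_sphere_def
    by (subst AE_distr_iff) (auto elim: eventually_mono)
qed

lemma integrable_uniform_sphere_bounded: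
  fixes \<phi> :: "real^'n \<Rightarrow> real"
  assumes "\<phi> \<in> borel_measurable borel" "AE y in uniform_sphere. norm (\<phi> y) \<le> B"
  shows "integrable uniform_sphere \<phi>"
  using prob_space_uniform_sphere assms
  by (intro finite_measure.integrable_const_bound[OF _ assms(2)]) (auto simp: prob_space_def)

text \<open>A linear isometry preserving Lebesgue measure preserves the uniform ball, and being
  homogeneous it commutes with the radial projection, hence preserves the uniform sphere.\<close>
lemma integral_uniform_sphere_invariant:
  fixes T :: "real^'n \<Rightarrow> real^'n" and \<phi> :: "real^'n \<Rightarrow> real"
  assumes [measurable]: "T \<in> borel_measurable borel" "\<phi> \<in> borel_measurable borel"
    and norm_T: "\<And>x. norm (T x) = norm x" and lborel_T: "distr lborel borel T = lborel"
    and homogeneous: "\<And>c x. T (c *\<^sub>R x) = c *\<^sub>R T x"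
  shows "(\<integral>y. \<phi> (T y) \<partial>uniform_sphere) = (\<integral>y. \<phi> y \<partial>uniform_sphere)"
proof -
  have ball: "distr uniform_ball borel T = uniform_ball"
  proof (rule measure_eqI)
    fix A assume "A \<in> sets (distr uniform_ball borel T)"
    then have [measurable]: "A \<in> sets borel" by simp
    have "emeasure (distr uniform_ball borel T) A
        = emeasure lborel (ball 0 1 \<inter> T -` A) / emeasure lborel (ball (0::real^'n) 1)"
      using measurable_sets_borel[OF assms(1)] by (simp add: emeasure_distr emeasure_uniform_measure)
    also have "ball 0 1 \<inter> T -` A = T -` (ball 0 1 \<inter> A)" using norm_T by auto
    also have "emeasure lborel (T -` (ball 0 1 \<inter> A)) = emeasure (distr lborel borel T) (ball 0 1 \<inter> A)"
      by (simp add: emeasure_distr)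
    finally show "emeasure (distr uniform_ball borel T) A = emeasure uniform_ball A"
      by (simp add: lborel_T emeasure_uniform_measure)
  qed simp
  have "(\<integral>y. \<phi> (T y) \<partial>uniform_sphere) = (\<integral>x. \<phi> (T x /\<^sub>R norm (T x)) \<partial>uniform_ball)"
    by (simp add: uniform_sphere_def integral_distr homogeneous norm_T)
  also have "\<dots> = (\<integral>x. \<phi> (x /\<^sub>R norm x) \<partial>distr uniform_ball borel T)"
    by (rule integral_distr[symmetric]) simp_all
  also have "\<dots> = (\<integral>y. \<phi> y \<partial>uniform_sphere)"
    by (simp add: ball uniform_sphere_def integral_distr)
  finally show ?thesis .
qed

lemma integral_uniform_sphere_signed_perm:
  assumes "bij p" "signs s" "(\<phi> :: real^'n \<Rightarrow> real) \<in> borel_measurable borel"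
  shows "(\<integral>y. \<phi> (signed_perm p s y) \<partial>uniform_sphere) = (\<integral>y. \<phi> y \<partial>uniform_sphere)"
  using assms linear_signed_perm[of p s]
  by (intro integral_uniform_sphere_invariant norm_signed_perm distr_lborel_signed_perm)
    (simp_all add: linear_scale)

lemma integrable_uniform_sphere_coord_mult:
  "integrable (uniform_sphere :: (real^'n) measure) (\<lambda>y. y $ i * y $ j)"
proof (rule integrable_uniform_sphere_bounded)
  show "AE y in uniform_sphere. norm (y $ i * y $ j) \<le> 1"
    using AE_uniform_sphere_norm
    by eventually_elim (metis abs_mult component_le_norm_cart mult_le_one abs_ge_zero real_norm_def)
qed simp

lemma integrable_uniform_sphere_const: "integrable (uniform_sphere :: (real^'n) measure) (\<lambda>y. c :: real)"
  by (metis prob_space_def prob_space_uniform_sphere finite_measure.integrable_const)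

lemma integrable_uniform_sphere_inner_mult:
  fixes g w :: "real^'n"
  shows "integrable uniform_sphere (\<lambda>y. (g \<bullet> y) * (y \<bullet> w))"
proof (rule integrable_uniform_sphere_bounded)
  show "AE y in uniform_sphere. norm ((g \<bullet> y) * (y \<bullet> w)) \<le> norm g * norm w"
    using AE_uniform_sphere_norm
  proof eventually_elim
    case (elim y)
    then show ?case
      using Cauchy_Schwarz_ineq2[of g y] Cauchy_Schwarz_ineq2[of y w] by (simp add: abs_mult mult_mono)
  qed
qed simp

lemma uniform_sphere_second_moment:
  "(\<integral>y. y $ i * y $ j \<partial>(uniform_sphere :: (real^'n) measure)) = (if i = j then 1 / real CARD('n) else 0)"
proof (cases "i = j")
  case False
  define s where "s = (\<lambda>k. if k = i then -1 else (1::real))"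
  have "(\<integral>y. (signed_perm id s y) $ i * (signed_perm id s y) $ j \<partial>uniform_sphere)
        = (\<integral>y. y $ i * y $ j \<partial>(uniform_sphere :: (real^'n) measure))"
    by (rule integral_uniform_sphere_signed_perm) (auto simp: signs_def s_def bij_def)
  with False show ?thesis by (simp add: signed_perm_def s_def)
next
  case True
  let ?m = "\<lambda>j. (\<integral>y. y $ j * y $ j \<partial>(uniform_sphere :: (real^'n) measure))"
  have swap: "?m j = ?m i" for j
  proof -
    define p where "p = Transposition.transpose i j"
    have "(\<integral>y. (signed_perm p (\<lambda>_. 1) y) $ i * (signed_perm p (\<lambda>_. 1) y) $ i \<partial>uniform_sphere) = ?m i"
      by (rule integral_uniform_sphere_signed_perm) (auto simp: signs_def p_def)
    then show ?thesis by (simp add: signed_perm_def p_def)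
  qed
  have "real CARD('n) * ?m i = (\<Sum>j\<in>(UNIV::'n set). ?m i)" by simp
  also have "\<dots> = (\<Sum>j\<in>UNIV. ?m j)" by (intro sum.cong refl swap[symmetric])
  also have "\<dots> = (\<integral>y. (\<Sum>j\<in>UNIV. y $ j * y $ j) \<partial>(uniform_sphere :: (real^'n) measure))"
    by (simp add: integrable_uniform_sphere_coord_mult)
  also have "\<dots> = (\<integral>y. 1 \<partial>(uniform_sphere :: (real^'n) measure))"
    using AE_uniform_sphere_norm
    by (intro integral_cong_AE) (auto elim!: eventually_mono simp: norm_eq_sqrt_inner inner_vec_def)
  also have "\<dots> = 1" by simp
  finally show ?thesis using True by (simp add: field_simps)
qed

lemma uniform_sphere_inner_moment:
  fixes g w :: "real^'n"
  shows "(\<integral>y. (g \<bullet> y) * (y \<bullet> w) \<partial>uniform_sphere) = (g \<bullet> w) / real CARD('n)"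
proof -
  have "(\<integral>y. (g \<bullet> y) * (y \<bullet> w) \<partial>uniform_sphere)
      = (\<integral>y. (\<Sum>i\<in>UNIV. \<Sum>j\<in>UNIV. (g $ i * w $ j) * (y $ i * y $ j)) \<partial>uniform_sphere)"
    by (simp add: inner_vec_def sum_product algebra_simps)
  also have "\<dots> = (\<Sum>i\<in>UNIV. \<Sum>j\<in>UNIV. (g $ i * w $ j) * (\<integral>y. y $ i * y $ j \<partial>uniform_sphere))"
    by (simp add: integrable_uniform_sphere_coord_mult)
  also have "\<dots> = (g \<bullet> w) / real CARD('n)"
    by (simp add: uniform_sphere_second_moment inner_vec_def sum_divide_distrib if_distrib sum.If_cases
        cong: if_cong)
  finally show ?thesis .
qed

section \<open>Complex-step differentiation\<close>

lemma cvec_nth[simp]: "cvec x y $ j = Complex (x $ j) (y $ j)"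
  by (simp add: cvec_def)

lemma continuous_on_cvec[continuous_intros]:
  assumes "continuous_on S a" "continuous_on S b"
  shows "continuous_on S (\<lambda>p. cvec (a p) (b p))"
proof -
  have eq: "(\<lambda>p. cvec (fst p) (snd p)) = (\<lambda>p. \<chi> j. complex_of_real (fst p $ j) + \<i> * complex_of_real (snd p $ j))"
    by (auto simp: vec_eq_iff complex_eq_iff)
  have "continuous_on UNIV (\<lambda>p::(real^'n) \<times> (real^'n). cvec (fst p) (snd p))"
    unfolding eq by (intro continuous_on_vec_lambda continuous_intros)
  from continuous_on_compose2[OF this, of S "\<lambda>p. (a p, b p)"] show ?thesis
    using assms by (auto intro: continuous_intros)
qed

lemma cvec_in_strip:
  assumes "x \<in> D" "norm y < d" shows "cvec x y \<in> strip D d"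
proof -
  have "\<forall>j. \<bar>y $ j\<bar> < d" using component_le_norm_cart[of y] assms(2) by (meson le_less_trans)
  then show ?thesis using assms(1) by (auto simp: strip_def)
qed

lemma cvec_line: "cvec x 0 + (\<chi> j. s * cvec y 0 $ j) = cvec (x + Re s *\<^sub>R y) (Im s *\<^sub>R y)"
  by (simp add: vec_eq_iff complex_eq_iff)

lemma bounded_linear_cvec_real: "bounded_linear (\<lambda>v::real^'n. cvec v 0)"
  by (rule bounded_linearI') (auto simp: vec_eq_iff complex_eq_iff)

definition cderiv :: "(complex^'n \<Rightarrow> complex) \<Rightarrow> complex^'n \<Rightarrow> complex^'n \<Rightarrow> complex" where
  "cderiv F z = (SOME F'. (F has_derivative F') (at z) \<and> (\<forall>v. F' (\<chi> j. \<i> * v $ j) = \<i> * F' v))"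

lemma
  assumes "holomorphic_vec_on F S" "z \<in> S"
  shows has_derivative_cderiv: "(F has_derivative cderiv F z) (at z)"
    and cderiv_mult_i: "cderiv F z (\<chi> j. \<i> * v $ j) = \<i> * cderiv F z v"
proof -
  have "\<exists>F'. (F has_derivative F') (at z) \<and> (\<forall>v. F' (\<chi> j. \<i> * v $ j) = \<i> * F' v)"
    using assms by (auto simp: holomorphic_vec_on_def)
  from someI_ex[OF this] show "(F has_derivative cderiv F z) (at z)" "cderiv F z (\<chi> j. \<i> * v $ j) = \<i> * cderiv F z v"
    unfolding cderiv_def by blast+
qed

lemma holomorphic_vec_on_imp_continuous_on: "holomorphic_vec_on F S \<Longrightarrow> continuous_on S F"
  by (meson continuous_at_imp_continuous_on has_derivative_cderiv has_derivative_continuous)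

lemma cderiv_mult:
  assumes "holomorphic_vec_on F S" "z \<in> S"
  shows "cderiv F z (\<chi> j. h * c $ j) = cderiv F z c * h"
proof -
  interpret L: bounded_linear "cderiv F z"
    using has_derivative_cderiv[OF assms] by (rule has_derivative_bounded_linear)
  have "(\<chi> j. h * c $ j) = Re h *\<^sub>R c + Im h *\<^sub>R (\<chi> j. \<i> * c $ j)"
    by (simp add: vec_eq_iff complex_eq_iff algebra_simps)
  then have "cderiv F z (\<chi> j. h * c $ j) = Re h *\<^sub>R cderiv F z c + Im h *\<^sub>R (\<i> * cderiv F z c)"
    by (simp only: L.add L.scaleR cderiv_mult_i[OF assms])
  also have "\<dots> = cderiv F z c * h"
    by (simp add: scaleR_conv_of_real complex_eq_iff algebra_simps)
  finally show ?thesis .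
qed

lemma has_field_derivative_restrict_line:
  assumes hol: "holomorphic_vec_on F S" and z: "z + (\<chi> j. s * c $ j) \<in> S"
  shows "((\<lambda>s. F (z + (\<chi> j. s * c $ j))) has_field_derivative cderiv F (z + (\<chi> j. s * c $ j)) c) (at s)"
proof -
  have "bounded_linear (\<lambda>h::complex. \<chi> j. h * c $ j)"
    by (rule bounded_linearI') (auto simp: vec_eq_iff algebra_simps complex_eq_iff)
  then have "((\<lambda>s. z + (\<chi> j. s * c $ j)) has_derivative (\<lambda>h. \<chi> j. h * c $ j)) (at s)"
    by (auto intro!: derivative_eq_intros bounded_linear_imp_has_derivative)
  from has_derivative_compose[OF this has_derivative_cderiv[OF hol z]]
  have "((\<lambda>s. F (z + (\<chi> j. s * c $ j))) has_derivative (\<lambda>h. cderiv F (z + (\<chi> j. s * c $ j)) (\<chi> j. h * c $ j))) (at s)"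
    by (simp add: o_def)
  then show ?thesis
    unfolding has_field_derivative_def cderiv_mult[OF hol z] .
qed

lemma Im_deriv_eq_0_if_real_on_reals:
  fixes g :: "complex \<Rightarrow> complex"
  assumes hol: "g holomorphic_on ball 0 r"
    and real: "\<And>t::real. \<bar>t\<bar> < r \<Longrightarrow> Im (g (of_real t)) = 0" and t: "\<bar>t\<bar> < r"
  shows "Im (deriv g (of_real t)) = 0"
proof -
  have "(g has_field_derivative deriv g (of_real t)) (at (of_real t))"
    using t by (intro holomorphic_derivI[OF hol open_ball]) simp
  then have "((\<lambda>x. Im (g (of_real x))) has_real_derivative Im (deriv g (of_real t))) (at t)"
    using field_vector_diff_chain_at[of complex_of_real 1 t g] has_field_derivative_Im
    by (fastforce intro: derivative_eq_intros simp: o_def)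
  then have "((\<lambda>x. Im (g (of_real x))) has_derivative (*) (Im (deriv g (of_real t)))) (at t)"
    by (simp add: has_field_derivative_def)
  from has_derivative_transform_within_open[OF this, of "{-r<..<r}"]
  have "((\<lambda>x. 0::real) has_real_derivative Im (deriv g (of_real t))) (at t)"
    using t real by (auto simp: has_field_derivative_def abs_less_iff)
  from DERIV_unique[OF this DERIV_const] show ?thesis .
qed

lemma Cauchy_higher_deriv_bound:
  fixes g :: "complex \<Rightarrow> complex"
  assumes hol: "g holomorphic_on ball 0 r" and R: "0 < R" "2 * R < r"
    and bound: "\<And>s. cmod s \<le> 2 * R \<Longrightarrow> cmod (g s) \<le> M" and \<xi>: "cmod \<xi> \<le> R"
  shows "cmod ((deriv ^^ n) g \<xi>) \<le> fact n * M / R ^ n"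
proof (rule Cauchy_inequality)
  have cball: "cball \<xi> R \<subseteq> ball 0 r"
  proof
    fix w assume "w \<in> cball \<xi> R"
    then have "cmod (w - \<xi>) \<le> R" by (simp add: dist_norm norm_minus_commute)
    then show "w \<in> ball 0 r" using \<xi> R norm_triangle_ineq2[of w \<xi>] by simp
  qed
  then show "g holomorphic_on ball \<xi> R" "continuous_on (cball \<xi> R) g"
    using holomorphic_on_subset[OF hol] holomorphic_on_imp_continuous_on ball_subset_cball by blast+
  show "cmod (g w) \<le> M" if "cmod (\<xi> - w) = R" for w
    using bound norm_triangle_ineq2[of w \<xi>] that \<xi> by (simp add: norm_minus_commute)
qed (use R in auto)

text \<open>Along the imaginary axis the even Taylor terms of a function real on the reals are real, so
  the imaginary part is the first-order term up to a cubic remainder.\<close>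
lemma complex_step_Taylor:
  fixes g :: "complex \<Rightarrow> complex"
  assumes hol: "g holomorphic_on ball 0 r" and R: "0 < R" "2 * R < r"
    and bound: "\<And>s. cmod s \<le> 2 * R \<Longrightarrow> cmod (g s) \<le> M"
    and real: "\<And>t::real. \<bar>t\<bar> < r \<Longrightarrow> Im (g (of_real t)) = 0"
    and t: "0 \<le> t" "t \<le> R"
  shows "\<bar>Im (g (\<i> * of_real t)) - t * Re (deriv g 0)\<bar> \<le> 3 * M / R ^ 3 * t ^ 3"
proof -
  let ?T = "\<Sum>i\<le>2. (deriv ^^ i) g 0 * (\<i> * of_real t - 0) ^ i / fact i"
  have "cmod ((deriv ^^ 0) g (\<i> * of_real t) - ?T) \<le> (fact 3 * M / R ^ 3) * cmod (\<i> * of_real t - 0) ^ Suc 2 / fact 2"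
  proof (rule complex_Taylor[of "cball 0 R" 2 "\<lambda>i. (deriv ^^ i) g"])
    fix i :: nat and s :: complex assume s: "s \<in> cball 0 R"
    then have "((deriv ^^ i) g has_field_derivative deriv ((deriv ^^ i) g) s) (at s)"
      using R by (intro holomorphic_derivI[OF holomorphic_higher_deriv[OF hol open_ball] open_ball]) auto
    then show "((deriv ^^ i) g has_field_derivative (deriv ^^ Suc i) g s) (at s within cball 0 R)"
      by (simp add: has_field_derivative_at_within)
    show "cmod ((deriv ^^ Suc 2) g s) \<le> fact 3 * M / R ^ 3"
      using Cauchy_higher_deriv_bound[OF hol R bound, of s 3] s by (simp add: numeral_3_eq_3)
  qed (use t R in \<open>auto simp: norm_mult\<close>)
  also have "\<dots> = 3 * M / R ^ 3 * t ^ 3"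
    using t by (simp add: norm_mult fact_numeral)
  finally have remainder: "cmod (g (\<i> * of_real t) - ?T) \<le> 3 * M / R ^ 3 * t ^ 3" by simp
  have "Im (deriv (deriv g) (of_real 0)) = 0"
    using R real by (intro Im_deriv_eq_0_if_real_on_reals[OF holomorphic_deriv[OF hol open_ball]]
        Im_deriv_eq_0_if_real_on_reals[OF hol]) auto
  moreover have "Im (g 0) = 0" using real[of 0] R by simp
  ultimately have "Im ?T = t * Re (deriv g 0)"
    by (simp add: numeral_2_eq_2 power2_eq_square)
  then show ?thesis
    using abs_Im_le_cmod[of "g (\<i> * of_real t) - ?T"] remainder by simp
qed

lemma complex_step_bound:
  fixes g :: "complex \<Rightarrow> complex"
  assumes hol: "g holomorphic_on ball 0 r" and R: "0 < R" "2 * R < r"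
    and bound: "\<And>s. cmod s \<le> 2 * R \<Longrightarrow> cmod (g s) \<le> M"
    and real: "\<And>t::real. \<bar>t\<bar> < r \<Longrightarrow> Im (g (of_real t)) = 0"
    and t: "0 < t" "t \<le> \<delta>" and B: "cmod (g (\<i> * of_real t)) \<le> B"
  shows "\<bar>Im (g (\<i> * of_real t)) - t * Re (deriv g 0)\<bar> \<le> max (3 * M / R ^ 3) ((B + \<delta> * M / R) / R ^ 3) * t ^ 3"
proof (cases "t \<le> R")
  case True
  then have "\<bar>Im (g (\<i> * of_real t)) - t * Re (deriv g 0)\<bar> \<le> 3 * M / R ^ 3 * t ^ 3"
    using complex_step_Taylor[OF hol R bound real] t by auto
  also have "\<dots> \<le> max (3 * M / R ^ 3) ((B + \<delta> * M / R) / R ^ 3) * t ^ 3"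
    using t by (intro mult_right_mono) auto
  finally show ?thesis .
next
  case False
  have "cmod (g 0) \<le> M" using bound[of 0] R by simp
  then have M: "M \<ge> 0" by (meson norm_ge_zero order_trans)
  have B0: "B \<ge> 0" using B by (meson norm_ge_zero order_trans)
  have "\<bar>Im (g (\<i> * of_real t))\<bar> \<le> B" using B abs_Im_le_cmod order_trans by blast
  moreover have "cmod (deriv g 0) \<le> M / R"
    using Cauchy_higher_deriv_bound[OF hol R bound, of 0 1] R by simp
  then have "\<bar>Re (deriv g 0)\<bar> \<le> M / R" using abs_Re_le_cmod[of "deriv g 0"] by linarith
  then have "t * \<bar>Re (deriv g 0)\<bar> \<le> \<delta> * (M / R)" using t by (intro mult_mono) auto
  then have "\<bar>t * Re (deriv g 0)\<bar> \<le> \<delta> * (M / R)" using t by (simp add: abs_mult)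
  ultimately have "\<bar>Im (g (\<i> * of_real t)) - t * Re (deriv g 0)\<bar> \<le> B + \<delta> * (M / R)"
    using abs_triangle_ineq4[of "Im (g (\<i> * of_real t))" "t * Re (deriv g 0)"] by linarith
  also have "\<dots> = (B + \<delta> * M / R) / R ^ 3 * R ^ 3" using R by simp
  also have "\<dots> \<le> (B + \<delta> * M / R) / R ^ 3 * t ^ 3"
    using False R M t B0 by (intro mult_left_mono power_mono) auto
  also have "\<dots> \<le> max (3 * M / R ^ 3) ((B + \<delta> * M / R) / R ^ 3) * t ^ 3"
    using t by (intro mult_right_mono) auto
  finally show ?thesis .
qed

locale holomorphic_extension =
  fixes f :: "real^'n \<Rightarrow> real" and F :: "complex^'n \<Rightarrow> complex"
    and D :: "(real^'n) set" and dbar :: real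
  assumes open_D: "open D" and dbar_pos: "0 < dbar"
    and holomorphic: "holomorphic_vec_on F (strip D dbar)"
    and extends: "\<forall>z\<in>D. F (cvec z 0) = complex_of_real (f z)"
begin

lemma real_point_in_strip: "x \<in> D \<Longrightarrow> cvec x 0 \<in> strip D dbar"
  using dbar_pos by (intro cvec_in_strip) auto

lemma f_has_derivative:
  assumes x: "x \<in> D"
  shows "(f has_derivative (\<lambda>v. Re (cderiv F (cvec x 0) (cvec v 0)))) (at x)"
proof -
  have "((\<lambda>z. F (cvec z 0)) has_derivative (\<lambda>v. cderiv F (cvec x 0) (cvec v 0))) (at x)"
    using has_derivative_compose[OF bounded_linear_imp_has_derivative[OF bounded_linear_cvec_real]
        has_derivative_cderiv[OF holomorphic real_point_in_strip[OF x]]]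
    by (simp add: o_def)
  then have "((\<lambda>z. Re (F (cvec z 0))) has_derivative (\<lambda>v. Re (cderiv F (cvec x 0) (cvec v 0)))) (at x)"
    by (rule bounded_linear.has_derivative[OF bounded_linear_Re])
  then show ?thesis
    by (rule has_derivative_transform_within_open[OF _ open_D x]) (use extends in simp)
qed

lemma continuous_on_f: "continuous_on D f"
  by (meson continuous_at_imp_continuous_on f_has_derivative has_derivative_continuous)

lemma grad_inner_eq_Re_cderiv:
  assumes x: "x \<in> D"
  shows "grad f x \<bullet> y = Re (cderiv F (cvec x 0) (cvec y 0))"
proof -
  interpret L: bounded_linear "cderiv F (cvec x 0)"
    by (rule has_derivative_bounded_linear[OF has_derivative_cderiv[OF holomorphic real_point_in_strip[OF x]]])
  interpret C: bounded_linear "\<lambda>v::real^'n. cvec v 0" by (rule bounded_linear_cvec_real)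
  have "cvec y 0 = cvec (\<Sum>i\<in>UNIV. y $ i *\<^sub>R axis i 1) 0"
    using basis_expansion[of y] by (simp add: scalar_mult_eq_scaleR)
  also have "\<dots> = (\<Sum>i\<in>UNIV. y $ i *\<^sub>R cvec (axis i 1) 0)" by (simp add: C.sum C.scaleR)
  finally have "Re (cderiv F (cvec x 0) (cvec y 0)) = (\<Sum>i\<in>UNIV. Re (cderiv F (cvec x 0) (cvec (axis i 1) 0)) * y $ i)"
    by (simp add: L.sum L.scaleR mult.commute)
  moreover have "frechet_derivative f (at x) = (\<lambda>v. Re (cderiv F (cvec x 0) (cvec v 0)))"
    using frechet_derivative_at[OF f_has_derivative[OF x]] by simp
  ultimately show ?thesis by (simp add: grad_def inner_vec_def)
qed

lemma bounded_on_compact_in_strip: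
  assumes A: "compact A" "A \<subseteq> D" and \<rho>: "\<rho> < dbar"
  shows "\<exists>B>0. \<forall>a\<in>A. \<forall>b. norm b \<le> \<rho> \<longrightarrow> cmod (F (cvec a b)) \<le> B"
proof -
  define Q where "Q = (\<lambda>p. cvec (fst p) (snd p)) ` (A \<times> cball (0::real^'n) \<rho>)"
  have "compact Q" unfolding Q_def
    by (intro compact_continuous_image continuous_intros compact_Times A compact_cball)
  moreover have "Q \<subseteq> strip D dbar" unfolding Q_def
    using A \<rho> by (auto intro!: cvec_in_strip)
  ultimately have "compact (F ` Q)"
    using compact_continuous_image continuous_on_subset holomorphic_vec_on_imp_continuous_on[OF holomorphic]
    by metis
  then obtain B where "B > 0" "\<And>z. z \<in> Q \<Longrightarrow> cmod (F z) \<le> B"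
    using compact_imp_bounded bounded_pos by (metis imageI)
  moreover have "cvec a b \<in> Q" if "a \<in> A" "norm b \<le> \<rho>" for a b
    unfolding Q_def using that by (auto intro!: image_eqI[of _ _ "(a, b)"])
  ultimately show ?thesis by blast
qed

text \<open>Restrict F to the complex line through x in direction y and apply the one-variable estimate;
  the constants are uniform because F is bounded near the compact set K.\<close>
lemma complex_step_remainder:
  assumes K: "compact K" "K \<subseteq> D" "K \<noteq> {}" and \<delta>: "\<delta> < dbar"
  shows "\<exists>C. \<forall>x\<in>K. \<forall>y. norm y \<le> 1 \<longrightarrow> (\<forall>t. 0 < t \<and> t \<le> \<delta> \<longrightarrow>
     \<bar>Im (F (cvec x (t *\<^sub>R y))) - t * (grad f x \<bullet> y)\<bar> \<le> C * t ^ 3)"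
proof -
  obtain e where e: "e > 0" "{z. infdist z K \<le> e} \<subseteq> D"
    using compact_in_open_separated[OF K(3,1) open_D K(2)] by blast
  define A where "A = {z. infdist z K \<le> e}"
  define R where "R = min e dbar / 4"
  have R: "R > 0" "4 * R \<le> e" "4 * R \<le> dbar" using e dbar_pos by (auto simp: R_def)
  obtain M where M: "\<And>a b. a \<in> A \<Longrightarrow> norm b \<le> 2 * R \<Longrightarrow> cmod (F (cvec a b)) \<le> M"
    using bounded_on_compact_in_strip[of A "2 * R"] compact_infdist_le[OF K(3,1) e(1)] e R
    unfolding A_def by auto
  obtain B where B: "\<And>a b. a \<in> K \<Longrightarrow> norm b \<le> \<delta> \<Longrightarrow> cmod (F (cvec a b)) \<le> B"
    using bounded_on_compact_in_strip[OF K(1,2) \<delta>] by auto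
  define C where "C = max (3 * M / R ^ 3) ((B + \<delta> * M / R) / R ^ 3)"
  show ?thesis
  proof (intro exI[of _ C] ballI allI impI, elim conjE)
    fix x y :: "real^'n" and t :: real
    assume x: "x \<in> K" and y: "norm y \<le> 1" and t: "0 < t" "t \<le> \<delta>"
    define g where "g s = F (cvec x 0 + (\<chi> j. s * cvec y 0 $ j))" for s
    have g: "g s = F (cvec (x + Re s *\<^sub>R y) (Im s *\<^sub>R y))" for s
      unfolding g_def cvec_line ..
    have scale: "norm (a *\<^sub>R y) \<le> \<bar>a\<bar>" for a
      using y by (simp add: mult_left_le)
    have in_A: "x + Re s *\<^sub>R y \<in> A" if "cmod s \<le> e" for s
    proof -
      have "dist (x + Re s *\<^sub>R y) x \<le> e"
        using scale[of "Re s"] abs_Re_le_cmod[of s] that by (simp add: dist_norm)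
      then show ?thesis unfolding A_def using infdist_le2[OF x] by blast
    qed
    have "(g has_field_derivative cderiv F (cvec x 0 + (\<chi> j. s * cvec y 0 $ j)) (cvec y 0)) (at s)"
      if "cmod s < 4 * R" for s
    proof -
      have "norm (Im s *\<^sub>R y) < dbar"
        using scale[of "Im s"] abs_Im_le_cmod[of s] that R by linarith
      then have "cvec x 0 + (\<chi> j. s * cvec y 0 $ j) \<in> strip D dbar"
        using in_A[of s] that R e(2) unfolding cvec_line A_def by (auto intro!: cvec_in_strip)
      then show ?thesis unfolding g_def by (rule has_field_derivative_restrict_line[OF holomorphic])
    qed
    note g_deriv = this
    have hol: "g holomorphic_on ball 0 (4 * R)"
      using g_deriv by (auto simp: holomorphic_on_open dist_norm) blast
    have R2: "0 < R" "2 * R < 4 * R" using R by auto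
    have bound: "cmod (g s) \<le> M" if "cmod s \<le> 2 * R" for s
    proof -
      have "norm (Im s *\<^sub>R y) \<le> 2 * R" using scale[of "Im s"] abs_Im_le_cmod[of s] that by linarith
      then show ?thesis unfolding g by (intro M in_A) (use that R in auto)
    qed
    have real: "Im (g (of_real \<tau>)) = 0" if "\<bar>\<tau>\<bar> < 4 * R" for \<tau>
    proof -
      have "x + \<tau> *\<^sub>R y \<in> D" using in_A[of "of_real \<tau>"] that R e(2) by (auto simp: A_def)
      then show ?thesis using extends by (simp add: g)
    qed
    have "deriv g 0 = cderiv F (cvec x 0) (cvec y 0)"
      using DERIV_imp_deriv[OF g_deriv[of 0]] R by (simp add: zero_vec_def[symmetric])
    then have dg0: "Re (deriv g 0) = grad f x \<bullet> y"
      using grad_inner_eq_Re_cderiv x K(2) by auto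
    have "norm (t *\<^sub>R y) \<le> t" using y t by (simp add: mult_left_le)
    then have "norm (t *\<^sub>R y) \<le> \<delta>" using t by linarith
    then have "cmod (g (\<i> * of_real t)) \<le> B" using B[OF x] by (simp add: g)
    then have "\<bar>Im (g (\<i> * of_real t)) - t * Re (deriv g 0)\<bar> \<le> C * t ^ 3"
      using complex_step_bound[OF hol R2 bound real t] by (simp add: C_def)
    then show "\<bar>Im (F (cvec x (t *\<^sub>R y))) - t * (grad f x \<bullet> y)\<bar> \<le> C * t ^ 3"
      using dg0 by (simp add: g)
  qed
qed

end

section \<open>Probabilistic and elementary inequalities\<close>

lemma integral_indep_var_lower_bound:
  fixes X :: "'a \<Rightarrow> 'b::{second_countable_topology,banach}" and Y :: "'a \<Rightarrow> 'b"
    and H :: "'b \<times> 'b \<Rightarrow> real" and L :: "'b \<Rightarrow> real"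
  assumes P: "prob_space M" and ind: "prob_space.indep_var M borel X borel Y"
    and H: "H \<in> borel_measurable borel" "\<And>p. \<bar>H p\<bar> \<le> c"
    and L: "L \<in> borel_measurable borel" "\<And>x. \<bar>L x\<bar> \<le> c'"
    and lower: "\<And>x. x \<in> S \<Longrightarrow> L x \<le> (\<integral>y. H (x, y) \<partial>distr M borel Y)"
    and XS: "\<And>\<omega>. \<omega> \<in> space M \<Longrightarrow> X \<omega> \<in> S"
  shows "(\<integral>\<omega>. L (X \<omega>) \<partial>M) \<le> (\<integral>\<omega>. H (X \<omega>, Y \<omega>) \<partial>M)"
proof -
  interpret prob_space M by (rule P)
  have Xm: "X \<in> borel_measurable M" and Ym: "Y \<in> borel_measurable M"
    using ind indep_var_rv1 indep_var_rv2 by blast+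
  let ?PX = "distr M borel X" and ?PY = "distr M borel Y"
  interpret PX: prob_space ?PX by (rule prob_space_distr[OF Xm])
  interpret PY: prob_space ?PY by (rule prob_space_distr[OF Ym])
  interpret PXY: pair_prob_space ?PX ?PY ..
  have H2: "H \<in> borel_measurable (borel \<Otimes>\<^sub>M borel)" using H(1) by (simp add: borel_prod)
  have "H \<in> borel_measurable (?PX \<Otimes>\<^sub>M ?PY)"
    using H2 by (simp add: measurable_cong_sets[OF sets_pair_measure_cong[OF sets_distr sets_distr] refl])
  then have Hint: "integrable (?PX \<Otimes>\<^sub>M ?PY) H"
    using H(2) by (intro PXY.integrable_const_bound[of _ c]) auto
  have "(\<integral>\<omega>. H (X \<omega>, Y \<omega>) \<partial>M) = (\<integral>p. H p \<partial>distr M (borel \<Otimes>\<^sub>M borel) (\<lambda>x. (X x, Y x)))"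
    by (rule integral_distr[OF measurable_Pair[OF Xm Ym] H2, symmetric])
  also have "\<dots> = (\<integral>p. H p \<partial>(?PX \<Otimes>\<^sub>M ?PY))"
    using ind by (simp add: indep_var_distribution_eq)
  also have "\<dots> = (\<integral>x. (\<integral>y. H (x, y) \<partial>?PY) \<partial>?PX)"
    by (rule PXY.integral_fst'[OF Hint, symmetric])
  also have "\<dots> = (\<integral>\<omega>. (\<integral>y. H (X \<omega>, y) \<partial>?PY) \<partial>M)"
    using PXY.integrable_fst'[OF Hint] borel_measurable_integrable by (fastforce intro: integral_distr[OF Xm])
  finally have eq: "(\<integral>\<omega>. H (X \<omega>, Y \<omega>) \<partial>M) = (\<integral>\<omega>. (\<integral>y. H (X \<omega>, y) \<partial>?PY) \<partial>M)" .
  have "integrable M (\<lambda>\<omega>. \<integral>y. H (X \<omega>, y) \<partial>?PY)"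
    using PXY.integrable_fst'[OF Hint] borel_measurable_integrable
    by (fastforce simp: integrable_distr_eq[OF Xm])
  moreover have "integrable M (\<lambda>\<omega>. L (X \<omega>))"
    using L Xm by (intro integrable_const_bound[of _ c']) auto
  ultimately show ?thesis
    unfolding eq by (intro integral_mono) (use lower XS in auto)
qed

lemma projected_step_sq_dist_le:
  assumes K: "convex K" "closed K" "K \<noteq> {}" and z: "z \<in> K"
  shows "(norm (closest_point K (x - v) - z))\<^sup>2 \<le> (norm (x - z))\<^sup>2 - 2 * (v \<bullet> (x - z)) + (norm v)\<^sup>2"
proof -
  have "dist (closest_point K (x - v)) (closest_point K z) \<le> dist (x - v) z"
    by (rule closest_point_lipschitz[OF K])
  then have "norm (closest_point K (x - v) - z) \<le> norm ((x - z) - v)"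
    by (simp add: closest_point_self[OF z] dist_norm algebra_simps)
  then have "(norm (closest_point K (x - v) - z))\<^sup>2 \<le> (norm ((x - z) - v))\<^sup>2"
    by (intro power_mono) auto
  also have "\<dots> = (norm (x - z))\<^sup>2 - 2 * (v \<bullet> (x - z)) + (norm v)\<^sup>2"
    unfolding power2_norm_eq_inner by (simp add: inner_diff_left inner_diff_right inner_commute)
  finally show ?thesis .
qed

lemma strongly_convex_on_mean_le:
  assumes sc: "strongly_convex_on D tau f" and tau: "tau \<ge> 0"
    and C: "convex C" "C \<subseteq> D" and x: "\<And>k. k \<in> {1..n} \<Longrightarrow> x k \<in> C" and n: "n \<ge> 1"
  shows "f ((1 / real n) *\<^sub>R (\<Sum>k=1..n. x k)) \<le> (1 / real n) * (\<Sum>k=1..n. f (x k))"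
proof -
  define z where "z = (1 / real n) *\<^sub>R (\<Sum>k=1..n. x k)"
  have "z = (\<Sum>k=1..n. (1 / real n) *\<^sub>R x k)" by (simp add: z_def scaleR_sum_right)
  also have "\<dots> \<in> C" by (rule convex_sum[OF _ C(1)]) (use n x in auto)
  finally have z: "z \<in> D" using C(2) by auto
  have "(\<Sum>k=1..n. x k - z) = (\<Sum>k=1..n. x k) - (\<Sum>k=1..n. z)"
    by (rule sum_subtractf)
  also have "(\<Sum>k=1..n. z) = real n *\<^sub>R z" by (subst sum_constant_scaleR) simp
  also have "real n *\<^sub>R z = (\<Sum>k=1..n. x k)" using n by (simp add: z_def)
  finally have "(\<Sum>k=1..n. f z + grad f z \<bullet> (x k - z)) = real n * f z"
    by (simp add: sum.distrib inner_sum_right[symmetric])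
  moreover have "f z + grad f z \<bullet> (x k - z) \<le> f (x k)" if "k \<in> {1..n}" for k
  proof -
    have "f (x k) \<ge> f z + grad f z \<bullet> (x k - z) + tau / 2 * (norm (x k - z))\<^sup>2"
      using sc z x[OF that] C(2) unfolding strongly_convex_on_def by blast
    moreover have "tau / 2 * (norm (x k - z))\<^sup>2 \<ge> 0" using tau by simp
    ultimately show ?thesis by linarith
  qed
  then have "(\<Sum>k=1..n. f z + grad f z \<bullet> (x k - z)) \<le> (\<Sum>k=1..n. f (x k))"
    by (rule sum_mono)
  ultimately show ?thesis using n by (simp add: z_def field_simps)
qed

lemma mult_le_quarter_square_add:
  fixes b r tau :: real
  assumes "tau > 0"
  shows "b * r \<le> tau / 4 * r\<^sup>2 + b\<^sup>2 / tau"
proof -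
  have "0 \<le> (tau * r / 2 - b)\<^sup>2 / tau" using assms by simp
  also have "\<dots> = tau / 4 * r\<^sup>2 - b * r + b\<^sup>2 / tau"
    using assms by (simp add: power2_eq_square field_simps)
  finally show ?thesis by simp
qed

lemma sum_powr_neg_two_thirds_le: "(\<Sum>k=1..n. real k powr (-2/3)) \<le> 3 * real n powr (1/3)"
proof (induction n)
  case (Suc n)
  show ?case
  proof (cases "n = 0")
    case False
    define a where "a = real n powr (1/3)"
    define b where "b = real (Suc n) powr (1/3)"
    have a: "0 < a" "a ^ 3 = real n" using False by (simp_all add: a_def powr_power)
    have b: "a \<le> b" "b ^ 3 = real n + 1" unfolding a_def b_def by (auto intro: powr_mono2 simp: powr_power)
    have eq: "real (Suc n) powr (-2/3) = 1 / b ^ 2"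
      by (simp add: b_def powr_power powr_minus_divide[symmetric] powr_minus)
    have "1 \<le> (b - a) * (3 * b ^ 2)"
    proof -
      have "1 = (b - a) * (b\<^sup>2 + a * b + a\<^sup>2)"
        using a b by (simp add: power2_eq_square power3_eq_cube algebra_simps)
      also have "\<dots> \<le> (b - a) * (3 * b ^ 2)"
      proof -
        have "a * b \<le> b * b" "a * a \<le> b * b" using a b by (auto intro: mult_mono)
        then show ?thesis using b by (intro mult_left_mono) (auto simp: power2_eq_square)
      qed
      finally show ?thesis .
    qed
    then have "1 / b ^ 2 \<le> 3 * (b - a)"
      using a b by (simp add: field_simps)
    then have "real (Suc n) powr (-2/3) \<le> 3 * (b - a)" by (simp only: eq)
    then show ?thesis using Suc.IH by (simp add: a_def b_def)
  qed simp
qed simp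

text \<open>Summing a recursion of this shape the distance terms telescope to a nonpositive quantity.\<close>
lemma sum_le_of_weighted_recursion:
  fixes a d :: "nat \<Rightarrow> real"
  assumes step: "\<And>k. k \<ge> 1 \<Longrightarrow> d k \<le> c * ((real k - 1) * a k - real k * a (Suc k)) + A * real k powr (-2/3)"
    and c: "c \<ge> 0" and A: "A \<ge> 0" and a: "\<And>k. a k \<ge> 0"
  shows "(\<Sum>k=1..n. d k) \<le> 3 * A * real n powr (1/3)"
proof -
  have telescope: "(\<Sum>k=1..n. c * ((real k - 1) * a k - real k * a (Suc k))) = - c * real n * a (Suc n)" for n
  proof (induction n)
    case (Suc n)
    then show ?case by (subst sum.nat_ivl_Suc') (auto simp: algebra_simps)
  qed simp
  have "(\<Sum>k=1..n. d k) \<le> (\<Sum>k=1..n. c * ((real k - 1) * a k - real k * a (Suc k)) + A * real k powr (-2/3))"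
    by (intro sum_mono step) auto
  also have "\<dots> = - c * real n * a (Suc n) + A * (\<Sum>k=1..n. real k powr (-2/3))"
    by (simp only: sum.distrib telescope sum_distrib_left)
  also have "\<dots> \<le> A * (3 * real n powr (1/3))"
  proof -
    have "- c * real n * a (Suc n) \<le> 0" using c a[of "Suc n"] by simp
    moreover have "A * (\<Sum>k=1..n. real k powr (-2/3)) \<le> A * (3 * real n powr (1/3))"
      using A sum_powr_neg_two_thirds_le[of n] by (rule mult_left_mono[rotated])
    ultimately show ?thesis by linarith
  qed
  finally show ?thesis by simp
qed

text \<open>With smoothing parameter \<open>\<delta> k^(-1/6)\<close> and stepsize \<open>2 / (\<tau> k)\<close>, the squared bias and the
  variance contribution of a step are of the same order \<open>k^(-2/3)\<close>.\<close>
lemma smoothing_schedule_balance: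
  fixes n C V delta tau :: real and k :: nat
  assumes k: "k \<ge> 1" and d: "delta > 0" and t: "tau > 0"
  shows "(n * C * (delta * real k powr (-1/6))\<^sup>2)\<^sup>2 / tau
         + 2 / (tau * real k) * (n / (delta * real k powr (-1/6)))\<^sup>2 * V
       = (n\<^sup>2 * C\<^sup>2 * delta ^ 4 / tau + 2 * n\<^sup>2 * V / (tau * delta\<^sup>2)) * real k powr (-2/3)"
proof -
  define q where "q = real k powr (-1/6)"
  have kq: "real k > 0" "q > 0" using k by (simp_all add: q_def)
  have q4: "q ^ 4 = real k powr (-2/3)" using kq by (simp add: q_def powr_power)
  have "real k * q\<^sup>2 = real k powr 1 * real k powr (-1/3)" using kq by (simp add: q_def powr_power)
  also have "\<dots> = real k powr (1 + (-1/3))" by (rule powr_add[symmetric])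
  also have "\<dots> = real k powr (2/3)" by simp
  finally have "1 / (real k * q\<^sup>2) = real k powr (-2/3)" by (simp add: powr_minus_divide)
  with q4 kq d t show ?thesis unfolding q_def[symmetric]
    by (simp add: power_mult_distrib power_divide field_simps)
qed

text \<open>No measurability is assumed of g: if it fails, the Bochner integral of g is 0.\<close>
lemma integral_le_if_AE_eq:
  fixes g h :: "'a \<Rightarrow> real"
  assumes "AE \<omega> in M. g \<omega> = h \<omega>" "h \<in> borel_measurable M" "(\<integral>\<omega>. h \<omega> \<partial>M) \<le> c" "0 \<le> c"
  shows "(\<integral>\<omega>. g \<omega> \<partial>M) \<le> c"
proof (cases "g \<in> borel_measurable M")
  case True
  then show ?thesis using assms integral_cong_AE[of g M h] by simp
next
  case False
  then have "\<not> integrable M g" using borel_measurable_integrable by blast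
  then show ?thesis using assms(4) by (simp add: not_integrable_integral_eq)
qed

section \<open>The algorithm as a function of its random input\<close>

text \<open>Directions are clamped into the unit ball: this is the identity on the sphere, where
  the directions lie almost surely, and keeps every oracle query inside the strip.\<close>
definition unit_clamp :: "real^'n \<Rightarrow> real^'n" where
  "unit_clamp = closest_point (cball 0 1)"

lemma norm_unit_clamp: "norm (unit_clamp v) \<le> 1"
  using closest_point_in_set[of "cball 0 1" v] by (simp add: unit_clamp_def)

lemma unit_clamp_eq: "norm v \<le> 1 \<Longrightarrow> unit_clamp v = v"
  by (simp add: unit_clamp_def closest_point_self)

lemma continuous_on_unit_clamp: "continuous_on S unit_clamp"
  unfolding unit_clamp_def
  by (rule continuous_on_subset[OF continuous_on_closest_point]) auto

definition smoothing :: "real \<Rightarrow> nat \<Rightarrow> real" where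
  "smoothing delta k = delta * real k powr (-1/6)"

lemma smoothing_bounds:
  assumes "k \<ge> 1" "0 < delta"
  shows "0 < smoothing delta k" "smoothing delta k \<le> delta"
proof -
  have "real k powr (-1/6) \<le> real k powr 0" using assms(1) by (intro powr_mono) auto
  then show "0 < smoothing delta k" "smoothing delta k \<le> delta"
    using assms by (auto simp: smoothing_def mult_le_cancel_left1)
qed

text \<open>One step of Algorithm 1 (b). The current point is projected onto K as well, which changes
  nothing on K but makes the step a continuous function of all its arguments.\<close>
definition zo_step :: "(real^'n) set \<Rightarrow> (complex^'n \<Rightarrow> complex) \<Rightarrow> real \<Rightarrow> real \<Rightarrow> nat \<Rightarrow>
    real^'n \<Rightarrow> real^'n \<Rightarrow> real \<Rightarrow> real^'n" where
  "zo_step K F tau delta k x v \<xi> = closest_point K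
     (closest_point K x - (2 / (tau * real k)) *\<^sub>R
       ((real CARD('n) / smoothing delta k) *
         (Im (F (cvec (closest_point K x) (smoothing delta k *\<^sub>R unit_clamp v))) + \<xi>))
       *\<^sub>R unit_clamp v)"

text \<open>The iterates as functions of the whole random input: \<open>w (Inl k)\<close> carries the k-th
  direction and \<open>w (Inr k)\<close> the k-th noise, as in the independence hypothesis.\<close>
primrec zo_iterate :: "(real^'n) set \<Rightarrow> (complex^'n \<Rightarrow> complex) \<Rightarrow> real \<Rightarrow> real \<Rightarrow> real^'n \<Rightarrow>
    nat \<Rightarrow> (nat + nat \<Rightarrow> (real^'n) \<times> real) \<Rightarrow> real^'n" where
  "zo_iterate K F tau delta x1 0 w = x1"
| "zo_iterate K F tau delta x1 (Suc k) w = (if k = 0 then x1 else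
     zo_step K F tau delta k (zo_iterate K F tau delta x1 k w) (fst (w (Inl k))) (snd (w (Inr k))))"

lemma zo_iterate_in: "x1 \<in> K \<Longrightarrow> closed K \<Longrightarrow> K \<noteq> {} \<Longrightarrow> zo_iterate K F tau delta x1 k w \<in> K"
  by (induction k) (auto simp: zo_step_def closest_point_in_set)

lemma zo_iterate_restrict:
  "{1..<k} <+> {1..<k} \<subseteq> A \<Longrightarrow> zo_iterate K F tau delta x1 k (restrict w A) = zo_iterate K F tau delta x1 k w"
proof (induction k)
  case (Suc k)
  have sub: "{1..<k} <+> {1..<k} \<subseteq> A" using Suc.prems by auto
  show ?case
  proof (cases "k = 0")
    case False
    then have "Inl k \<in> A" "Inr k \<in> A" using Suc.prems by auto
    then show ?thesis using Suc.IH[OF sub] False by simp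
  qed simp
qed simp

context holomorphic_extension
begin

lemma continuous_on_query:
  assumes a: "continuous_on S a" "a ` S \<subseteq> D" and b: "continuous_on S b" and d: "0 < d" "d < dbar"
  shows "continuous_on S (\<lambda>z. F (cvec (a z) (d *\<^sub>R unit_clamp (b z))))"
proof (rule continuous_on_compose2[OF holomorphic_vec_on_imp_continuous_on[OF holomorphic]])
  show "continuous_on S (\<lambda>z. cvec (a z) (d *\<^sub>R unit_clamp (b z)))"
    using a b by (intro continuous_intros continuous_on_compose2[OF continuous_on_unit_clamp]) auto
  have "norm (d *\<^sub>R unit_clamp v) < dbar" for v :: "real^'n"
    using norm_unit_clamp[of v] d by (simp add: mult_le_one order_le_less_trans[OF mult_left_le])
  then show "(\<lambda>z. cvec (a z) (d *\<^sub>R unit_clamp (b z))) ` S \<subseteq> strip D dbar"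
    using a(2) by (blast intro: cvec_in_strip)
qed

lemma measurable_zo_iterate:
  assumes K: "convex K" "closed K" "K \<noteq> {}" "K \<subseteq> D" and delta: "0 < delta" "delta < dbar"
    and A: "{1..<k} <+> {1..<k} \<subseteq> A"
  shows "zo_iterate K F tau delta x1 k \<in> borel_measurable (Pi\<^sub>M A (\<lambda>_. borel))"
  using A
proof (induction k)
  case (Suc k)
  show ?case
  proof (cases "k = 0")
    case False
    have IH: "zo_iterate K F tau delta x1 k \<in> borel_measurable (Pi\<^sub>M A (\<lambda>_. borel))"
      using Suc by (intro Suc.IH) auto
    have "Inl k \<in> A" "Inr k \<in> A" using Suc.prems False by auto
    then have "(\<lambda>w. w (Inl k)) \<in> borel_measurable (Pi\<^sub>M A (\<lambda>_. borel))"
      "(\<lambda>w. w (Inr k)) \<in> borel_measurable (Pi\<^sub>M A (\<lambda>_. borel))"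
      using measurable_component_singleton[of _ A "\<lambda>_. borel :: ((real^'n) \<times> real) measure"] by auto
    moreover have "(fst :: (real^'n) \<times> real \<Rightarrow> real^'n) \<in> borel_measurable borel"
      by (intro borel_measurable_continuous_onI continuous_intros)
    moreover have "(snd :: (real^'n) \<times> real \<Rightarrow> real) \<in> borel_measurable borel"
      by (intro borel_measurable_continuous_onI continuous_intros)
    ultimately have arg: "(\<lambda>w. (zo_iterate K F tau delta x1 k w, fst (w (Inl k)), snd (w (Inr k))))
        \<in> borel_measurable (Pi\<^sub>M A (\<lambda>_. borel))"
      using IH by (intro borel_measurable_Pair) (auto dest: measurable_compose)
    have step: "(\<lambda>p. zo_step K F tau delta k (fst p) (fst (snd p)) (snd (snd p))) \<in> borel_measurable borel"
    proof (rule borel_measurable_continuous_onI)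
      have d: "0 < smoothing delta k" "smoothing delta k < dbar"
        using smoothing_bounds[of k delta] False delta by auto
      have "continuous_on UNIV (closest_point K)"
        using K by (intro continuous_on_closest_point) auto
      then have "continuous_on UNIV (\<lambda>p::(real^'n) \<times> (real^'n) \<times> real. closest_point K (fst p))"
        by (rule continuous_on_compose2) (auto intro: continuous_intros)
      then have "continuous_on UNIV (\<lambda>p::(real^'n) \<times> (real^'n) \<times> real.
          F (cvec (closest_point K (fst p)) (smoothing delta k *\<^sub>R unit_clamp (fst (snd p)))))"
        by (rule continuous_on_query[OF _ _ continuous_on_fst[OF continuous_on_snd[OF continuous_on_id]] d])
          (use K closest_point_in_set in auto)
      then show "continuous_on UNIV (\<lambda>p::(real^'n) \<times> (real^'n) \<times> real.
          zo_step K F tau delta k (fst p) (fst (snd p)) (snd (snd p)))"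
        unfolding zo_step_def using K
        by (intro continuous_on_compose2[OF continuous_on_closest_point] continuous_intros
            continuous_on_compose2[OF continuous_on_unit_clamp]) auto
    qed
    show ?thesis using measurable_compose[OF arg step] False by simp
  next
    case True
    then have "zo_iterate K F tau delta x1 (Suc k) = (\<lambda>w. x1)" by (intro ext) simp
    then show ?thesis by simp
  qed
next
  case 0
  have "zo_iterate K F tau delta x1 0 = (\<lambda>w. x1)" by (intro ext) simp
  then show ?case by simp
qed

lemma bounded_query:
  assumes K: "compact K" "K \<subseteq> D" and d: "0 < d" "d < dbar"
  shows "\<exists>B. \<forall>a\<in>K. \<forall>v. cmod (F (cvec a (d *\<^sub>R unit_clamp v))) \<le> B"
proof -
  obtain B where "\<forall>a\<in>K. \<forall>b. norm b \<le> d \<longrightarrow> cmod (F (cvec a b)) \<le> B"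
    using bounded_on_compact_in_strip[OF K d(2)] by auto
  moreover have "norm (d *\<^sub>R unit_clamp v) \<le> d" for v :: "real^'n"
    using norm_unit_clamp[of v] d by (simp add: mult_le_one mult_left_le)
  ultimately show ?thesis by blast
qed

lemma integrable_complex_step_estimator:
  assumes x: "x \<in> D" and d: "0 < d" "d < dbar"
  shows "integrable uniform_sphere (\<lambda>y. c * Im (F (cvec x (d *\<^sub>R unit_clamp y))) * (unit_clamp y \<bullet> w))"
proof -
  obtain B where B: "\<forall>a\<in>{x}. \<forall>v. cmod (F (cvec a (d *\<^sub>R unit_clamp v))) \<le> B"
    using bounded_query[OF compact_sing _ d, of x] x by blast
  have "continuous_on UNIV (\<lambda>y. F (cvec x (d *\<^sub>R unit_clamp y)))"
    by (rule continuous_on_query) (use x d in \<open>auto intro: continuous_on_const continuous_on_id\<close>)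
  then have "(\<lambda>y. c * Im (F (cvec x (d *\<^sub>R unit_clamp y))) * (unit_clamp y \<bullet> w)) \<in> borel_measurable borel"
    by (intro borel_measurable_continuous_onI continuous_on_mult continuous_on_const continuous_on_Im
        continuous_on_inner continuous_on_unit_clamp)
  moreover have "norm (c * Im (F (cvec x (d *\<^sub>R unit_clamp y))) * (unit_clamp y \<bullet> w)) \<le> \<bar>c\<bar> * (B * norm w)" for y
  proof -
    have "\<bar>Im (F (cvec x (d *\<^sub>R unit_clamp y)))\<bar> \<le> B" using B abs_Im_le_cmod order_trans by blast
    moreover have "\<bar>unit_clamp y \<bullet> w\<bar> \<le> norm w"
      using Cauchy_Schwarz_ineq2[of "unit_clamp y" w] norm_unit_clamp[of y]
      by (meson mult_left_le_one_le norm_ge_zero order_trans)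
    ultimately have "\<bar>Im (F (cvec x (d *\<^sub>R unit_clamp y)))\<bar> * \<bar>unit_clamp y \<bullet> w\<bar> \<le> B * norm w"
      by (intro mult_mono) auto
    then show ?thesis by (simp add: abs_mult mult.assoc mult_left_mono)
  qed
  ultimately show ?thesis by (intro integrable_uniform_sphere_bounded) auto
qed

text \<open>The complex-step estimator is nearly unbiased: by the second moments of the uniform
  sphere its mean differs from the gradient only by the cubic Taylor remainder divided by d.\<close>
lemma complex_step_estimator_correlation:
  assumes x: "x \<in> D" and d: "0 < d" "d < dbar"
    and remainder: "\<And>y. norm y \<le> 1 \<Longrightarrow> \<bar>Im (F (cvec x (d *\<^sub>R y))) - d * (grad f x \<bullet> y)\<bar> \<le> C * d ^ 3"
  shows "grad f x \<bullet> w - real CARD('n) * C * d\<^sup>2 * norm w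
      \<le> (\<integral>y. (real CARD('n) / d) * Im (F (cvec x (d *\<^sub>R unit_clamp y))) * (unit_clamp y \<bullet> w) \<partial>uniform_sphere)"
proof -
  let ?n = "real CARD('n)" and ?g = "grad f x"
  let ?e = "?n * C * d\<^sup>2 * norm w"
  have int_lower: "integrable uniform_sphere (\<lambda>y. ?n * ((?g \<bullet> y) * (y \<bullet> w)) - ?e)"
    by (intro Bochner_Integration.integrable_diff integrable_mult_right integrable_uniform_sphere_inner_mult
        integrable_uniform_sphere_const)
  have lower: "AE y in uniform_sphere.
      ?n * ((?g \<bullet> y) * (y \<bullet> w)) - ?e \<le> (?n / d) * Im (F (cvec x (d *\<^sub>R unit_clamp y))) * (unit_clamp y \<bullet> w)"
    using AE_uniform_sphere_norm
  proof eventually_elim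
    case (elim y)
    define r where "r = Im (F (cvec x (d *\<^sub>R y))) - d * (?g \<bullet> y)"
    have "\<bar>r\<bar> \<le> C * d ^ 3" using remainder elim by (simp add: r_def)
    moreover have "\<bar>y \<bullet> w\<bar> \<le> norm w" using Cauchy_Schwarz_ineq2[of y w] elim by simp
    ultimately have le: "\<bar>r\<bar> * \<bar>y \<bullet> w\<bar> \<le> C * d ^ 3 * norm w"
      by (intro mult_mono) auto
    have "\<bar>(?n / d) * r * (y \<bullet> w)\<bar> = ?n / d * (\<bar>r\<bar> * \<bar>y \<bullet> w\<bar>)"
      using d by (simp add: abs_mult)
    also have "\<dots> \<le> ?n / d * (C * d ^ 3 * norm w)"
      using le d by (intro mult_left_mono) auto
    also have "\<dots> = ?e" using d by (simp add: power2_eq_square power3_eq_cube)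
    finally have "- ((?n / d) * r * (y \<bullet> w)) \<le> ?e" by (rule abs_le_D2)
    moreover have "(?n / d) * Im (F (cvec x (d *\<^sub>R unit_clamp y))) * (unit_clamp y \<bullet> w)
        = ?n * ((?g \<bullet> y) * (y \<bullet> w)) + (?n / d) * r * (y \<bullet> w)"
      using d elim unfolding r_def unit_clamp_eq[of y, OF order_eq_refl[OF elim]]
      by (simp add: algebra_simps)
    ultimately show ?case by linarith
  qed
  have "?g \<bullet> w - ?e = ?n * (\<integral>y. (?g \<bullet> y) * (y \<bullet> w) \<partial>uniform_sphere) - (\<integral>y. ?e \<partial>(uniform_sphere :: (real^'n) measure))"
    by (simp add: uniform_sphere_inner_moment)
  also have "\<dots> = (\<integral>y. ?n * ((?g \<bullet> y) * (y \<bullet> w)) - ?e \<partial>uniform_sphere)"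
    using integrable_uniform_sphere_inner_mult[of ?g w] integrable_uniform_sphere_const[where 'n = 'n] by simp
  also have "\<dots> \<le> (\<integral>y. (?n / d) * Im (F (cvec x (d *\<^sub>R unit_clamp y))) * (unit_clamp y \<bullet> w) \<partial>uniform_sphere)"
    by (rule integral_mono_AE[OF int_lower integrable_complex_step_estimator[OF x d] lower])
  finally show ?thesis .
qed

end

section \<open>Expected descent of the iteration\<close>

locale complex_step_sgd = holomorphic_extension f F D dbar + prob_space M
  for f :: "real^'n \<Rightarrow> real" and F D dbar and M :: "'a measure" +
  fixes K :: "(real^'n) set" and tau delta sigma :: real and xstar x1 :: "real^'n"
    and u :: "nat \<Rightarrow> 'a \<Rightarrow> real^'n" and xi :: "nat \<Rightarrow> 'a \<Rightarrow> real"
  assumes tau_pos: "tau > 0" and strongly_convex: "strongly_convex_on D tau f"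
    and K: "K \<subseteq> D" "compact K" "convex K" and xstar: "xstar \<in> K" and x1: "x1 \<in> K"
    and delta: "0 < delta" "delta < dbar"
    and u_uniform: "\<And>k. k \<ge> 1 \<Longrightarrow> distr M borel (u k) = uniform_sphere"
    and xi_integrable: "\<And>k. k \<ge> 1 \<Longrightarrow> integrable M (xi k)"
    and xi_mean: "\<And>k. k \<ge> 1 \<Longrightarrow> (\<integral>\<omega>. xi k \<omega> \<partial>M) = 0"
    and xi_sq_integrable: "\<And>k. k \<ge> 1 \<Longrightarrow> integrable M (\<lambda>\<omega>. (xi k \<omega>)\<^sup>2)"
    and xi_variance: "\<And>k. k \<ge> 1 \<Longrightarrow> (\<integral>\<omega>. (xi k \<omega>)\<^sup>2 \<partial>M) \<le> sigma"
    and indep: "indep_vars (\<lambda>_. borel)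
        (\<lambda>i \<omega>. case i of Inl k \<Rightarrow> (u k \<omega>, 0) | Inr k \<Rightarrow> (0, xi k \<omega>)) ({1..} <+> {1..})"
begin

lemma K_closed: "closed K" and K_nonempty: "K \<noteq> {}"
  using K(2) compact_imp_closed x1 by auto

definition noise :: "'a \<Rightarrow> nat + nat \<Rightarrow> (real^'n) \<times> real" where
  "noise \<omega> i = (case i of Inl k \<Rightarrow> (u k \<omega>, 0) | Inr k \<Rightarrow> (0, xi k \<omega>))"

text \<open>The iteration with clamped directions; unlike the iterates of the algorithm it is measurable,
  and it agrees with them almost surely.\<close>
definition iterate :: "nat \<Rightarrow> 'a \<Rightarrow> real^'n" where
  "iterate k \<omega> = zo_iterate K F tau delta x1 k (noise \<omega>)"

definition stepsize :: "nat \<Rightarrow> real" where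
  "stepsize k = 2 / (tau * real k)"

definition estimator_scale :: "nat \<Rightarrow> real" where
  "estimator_scale k = real CARD('n) / smoothing delta k"

definition query :: "nat \<Rightarrow> 'a \<Rightarrow> real" where
  "query k \<omega> = Im (F (cvec (iterate k \<omega>) (smoothing delta k *\<^sub>R unit_clamp (u k \<omega>))))"

definition alignment :: "nat \<Rightarrow> 'a \<Rightarrow> real" where
  "alignment k \<omega> = unit_clamp (u k \<omega>) \<bullet> (iterate k \<omega> - xstar)"

definition sq_dist :: "nat \<Rightarrow> real" where
  "sq_dist k = (\<integral>\<omega>. (norm (iterate k \<omega> - xstar))\<^sup>2 \<partial>M)"

definition gap :: "nat \<Rightarrow> real" where
  "gap k = (\<integral>\<omega>. f (iterate k \<omega>) - f xstar \<partial>M)"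

lemma iterate_in_K: "iterate k \<omega> \<in> K"
  unfolding iterate_def by (rule zo_iterate_in[OF x1 K_closed K_nonempty])

lemma iterate_one: "iterate 1 \<omega> = x1"
  by (simp add: iterate_def)

lemma iterate_Suc:
  assumes "k \<ge> 1"
  shows "iterate (Suc k) \<omega> = closest_point K (iterate k \<omega> -
    stepsize k *\<^sub>R ((estimator_scale k * (query k \<omega> + xi k \<omega>)) *\<^sub>R unit_clamp (u k \<omega>)))"
  using assms iterate_in_K[of k \<omega>]
  by (simp add: iterate_def zo_step_def noise_def closest_point_self stepsize_def estimator_scale_def
      query_def)

lemma indep_var_restrict_noise:
  assumes "A \<inter> B = {}" "A \<subseteq> {1..} <+> {1..}" "B \<subseteq> {1..} <+> {1..}"
  shows "indep_var (Pi\<^sub>M A (\<lambda>_. borel)) (\<lambda>\<omega>. restrict (noise \<omega>) A) (Pi\<^sub>M B (\<lambda>_. borel)) (\<lambda>\<omega>. restrict (noise \<omega>) B)"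
proof -
  have "indep_vars (\<lambda>_. borel) (\<lambda>i \<omega>. noise \<omega> i) ({1..} <+> {1..})"
    using indep by (simp add: noise_def[abs_def])
  from indep_var_restrict[OF this assms] show ?thesis by simp
qed

lemma measurable_component_noise:
  assumes "i \<in> A"
  shows "(\<lambda>w. fst (w i)) \<in> borel_measurable (Pi\<^sub>M A (\<lambda>_. borel :: ((real^'n) \<times> real) measure))"
    and "(\<lambda>w. snd (w i)) \<in> borel_measurable (Pi\<^sub>M A (\<lambda>_. borel :: ((real^'n) \<times> real) measure))"
proof -
  have c: "(\<lambda>w. w i) \<in> borel_measurable (Pi\<^sub>M A (\<lambda>_. borel :: ((real^'n) \<times> real) measure))"
    using measurable_component_singleton[OF assms, of "\<lambda>_. borel :: ((real^'n) \<times> real) measure"] by simp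
  have "(fst :: (real^'n) \<times> real \<Rightarrow> real^'n) \<in> borel_measurable borel"
    by (intro borel_measurable_continuous_onI continuous_intros)
  from measurable_compose[OF c this]
  show "(\<lambda>w. fst (w i)) \<in> borel_measurable (Pi\<^sub>M A (\<lambda>_. borel :: ((real^'n) \<times> real) measure))" .
  have "(snd :: (real^'n) \<times> real \<Rightarrow> real) \<in> borel_measurable borel"
    by (intro borel_measurable_continuous_onI continuous_intros)
  from measurable_compose[OF c this]
  show "(\<lambda>w. snd (w i)) \<in> borel_measurable (Pi\<^sub>M A (\<lambda>_. borel :: ((real^'n) \<times> real) measure))" .
qed

lemma indep_var_iterate_direction:
  assumes k: "k \<ge> 1"
  shows "indep_var borel (iterate k) borel (u k)"
proof -
  define A where "A = {1..<k} <+> {1..<k}"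
  have "indep_var borel (zo_iterate K F tau delta x1 k \<circ> (\<lambda>\<omega>. restrict (noise \<omega>) A))
      borel ((\<lambda>w. fst (w (Inl k))) \<circ> (\<lambda>\<omega>. restrict (noise \<omega>) {Inl k}))"
    using k K delta K_closed K_nonempty
    by (intro indep_var_compose[OF indep_var_restrict_noise] measurable_zo_iterate
        measurable_component_noise) (auto simp: A_def)
  moreover have "zo_iterate K F tau delta x1 k \<circ> (\<lambda>\<omega>. restrict (noise \<omega>) A) = iterate k"
    by (auto simp: iterate_def zo_iterate_restrict A_def)
  moreover have "(\<lambda>w. fst (w (Inl k))) \<circ> (\<lambda>\<omega>. restrict (noise \<omega>) {Inl k}) = u k"
    by (auto simp: noise_def)
  ultimately show ?thesis by simp
qed

lemma indep_var_iterate_direction_noise: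
  assumes k: "k \<ge> 1" and g: "g \<in> borel_measurable borel"
  shows "indep_var borel (\<lambda>\<omega>. g (iterate k \<omega>, u k \<omega>) :: real) borel (xi k)"
proof -
  define A where "A = ({1..<k} <+> {1..<k}) \<union> {Inl k}"
  have "(\<lambda>w. (zo_iterate K F tau delta x1 k w, fst (w (Inl k)))) \<in> borel_measurable (Pi\<^sub>M A (\<lambda>_. borel))"
    using K delta K_closed K_nonempty
    by (intro borel_measurable_Pair measurable_zo_iterate measurable_component_noise) (auto simp: A_def)
  then have "indep_var borel ((\<lambda>w. g (zo_iterate K F tau delta x1 k w, fst (w (Inl k)))) \<circ> (\<lambda>\<omega>. restrict (noise \<omega>) A))
      borel ((\<lambda>w. snd (w (Inr k))) \<circ> (\<lambda>\<omega>. restrict (noise \<omega>) {Inr k}))"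
    using k g by (intro indep_var_compose[OF indep_var_restrict_noise] measurable_component_noise
        measurable_compose[OF _ g]) (auto simp: A_def)
  moreover have "(\<lambda>w. g (zo_iterate K F tau delta x1 k w, fst (w (Inl k)))) \<circ> (\<lambda>\<omega>. restrict (noise \<omega>) A)
      = (\<lambda>\<omega>. g (iterate k \<omega>, u k \<omega>))"
  proof (rule ext)
    fix \<omega>
    have "zo_iterate K F tau delta x1 k (restrict (noise \<omega>) A) = iterate k \<omega>"
      unfolding iterate_def by (rule zo_iterate_restrict) (auto simp: A_def)
    then show "((\<lambda>w. g (zo_iterate K F tau delta x1 k w, fst (w (Inl k)))) \<circ> (\<lambda>\<omega>. restrict (noise \<omega>) A)) \<omega>
        = g (iterate k \<omega>, u k \<omega>)"
      by (simp add: A_def noise_def)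
  qed
  moreover have "(\<lambda>w. snd (w (Inr k))) \<circ> (\<lambda>\<omega>. restrict (noise \<omega>) {Inr k}) = xi k"
    by (auto simp: noise_def)
  ultimately show ?thesis by simp
qed

lemma measurable_iterate: "k \<ge> 1 \<Longrightarrow> iterate k \<in> borel_measurable M"
  using indep_var_iterate_direction indep_var_rv1 by blast

lemma measurable_direction: "k \<ge> 1 \<Longrightarrow> u k \<in> borel_measurable M"
  using indep_var_iterate_direction indep_var_rv2 by blast

lemma continuous_on_f_closest_point: "continuous_on UNIV (\<lambda>x. f (closest_point K x))"
  by (rule continuous_on_compose2[OF continuous_on_f continuous_on_closest_point])
    (use K K_closed K_nonempty closest_point_in_set in auto)

lemma measurable_f_closest_point:
  "X \<in> borel_measurable M \<Longrightarrow> (\<lambda>\<omega>. f (closest_point K (X \<omega>))) \<in> borel_measurable M"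
  using measurable_compose borel_measurable_continuous_onI[OF continuous_on_f_closest_point] by blast

lemma bounded_f_on_K: obtains Bf where "\<And>x. x \<in> K \<Longrightarrow> \<bar>f x\<bar> \<le> Bf"
proof -
  have "compact (f ` K)"
    using compact_continuous_image[OF continuous_on_subset[OF continuous_on_f K(1)] K(2)] .
  then show thesis using that compact_imp_bounded bounded_real by (metis imageI)
qed

lemma bounded_dist_xstar: obtains R where "\<And>x. x \<in> K \<Longrightarrow> norm (x - xstar) \<le> R"
proof -
  obtain a where "\<forall>x\<in>K. norm x \<le> a" using compact_imp_bounded[OF K(2)] bounded_iff by blast
  then show thesis using that[of "a + norm xstar"] norm_triangle_ineq4 by (meson add_right_mono order_trans)
qed

lemma bounded_F_near_K: obtains B where "\<And>a b. a \<in> K \<Longrightarrow> norm b \<le> delta \<Longrightarrow> cmod (F (cvec a b)) \<le> B"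
  using bounded_on_compact_in_strip[OF K(2,1) delta(2)] by blast

lemma norm_smoothed_direction_le: "k \<ge> 1 \<Longrightarrow> norm (smoothing delta k *\<^sub>R unit_clamp v) \<le> delta"
  using norm_unit_clamp[of v] smoothing_bounds[of k delta] delta
  by (simp add: order_trans[OF mult_left_le])

lemma abs_query_le:
  assumes "k \<ge> 1" and B: "\<And>a b. a \<in> K \<Longrightarrow> norm b \<le> delta \<Longrightarrow> cmod (F (cvec a b)) \<le> B"
  shows "\<bar>query k \<omega>\<bar> \<le> B"
  using B[OF iterate_in_K norm_smoothed_direction_le[OF assms(1)]] abs_Im_le_cmod order_trans
  unfolding query_def by blast

lemma alignment_bound: "(\<And>x. x \<in> K \<Longrightarrow> norm (x - xstar) \<le> R) \<Longrightarrow> \<bar>alignment k \<omega>\<bar> \<le> R"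
  unfolding alignment_def
  using Cauchy_Schwarz_ineq2[of "unit_clamp (u k \<omega>)" "iterate k \<omega> - xstar"] norm_unit_clamp[of "u k \<omega>"]
    iterate_in_K[of k \<omega>]
  by (meson mult_left_le_one_le norm_ge_zero order_trans)

text \<open>Query times alignment as a function of the pair (point, direction), to which the independence
  of the iterate and the direction applies.\<close>
definition estimator_product :: "nat \<Rightarrow> (real^'n) \<times> (real^'n) \<Rightarrow> real" where
  "estimator_product k p = Im (F (cvec (closest_point K (fst p)) (smoothing delta k *\<^sub>R unit_clamp (snd p))))
     * (unit_clamp (snd p) \<bullet> (closest_point K (fst p) - xstar))"

lemma estimator_product_iterate: "estimator_product k (iterate k \<omega>, u k \<omega>) = query k \<omega> * alignment k \<omega>"
  using iterate_in_K by (simp add: estimator_product_def query_def alignment_def closest_point_self)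

lemma abs_estimator_product_le:
  assumes k: "k \<ge> 1" and B: "\<And>a b. a \<in> K \<Longrightarrow> norm b \<le> delta \<Longrightarrow> cmod (F (cvec a b)) \<le> B"
    and R: "\<And>x. x \<in> K \<Longrightarrow> norm (x - xstar) \<le> R"
  shows "\<bar>estimator_product k p\<bar> \<le> B * R"
proof -
  define x v where "x = closest_point K (fst p)" and "v = unit_clamp (snd p)"
  have x: "x \<in> K" unfolding x_def by (rule closest_point_in_set[OF K_closed K_nonempty])
  have "\<bar>Im (F (cvec x (smoothing delta k *\<^sub>R v)))\<bar> \<le> B"
    using B[OF x norm_smoothed_direction_le[OF k]] abs_Im_le_cmod order_trans unfolding v_def by blast
  moreover have "\<bar>v \<bullet> (x - xstar)\<bar> \<le> R"
    using Cauchy_Schwarz_ineq2[of v "x - xstar"] norm_unit_clamp[of "snd p"] R[OF x] unfolding v_def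
    by (meson mult_left_le_one_le norm_ge_zero order_trans)
  ultimately have "\<bar>Im (F (cvec x (smoothing delta k *\<^sub>R v)))\<bar> * \<bar>v \<bullet> (x - xstar)\<bar> \<le> B * R"
    by (intro mult_mono) (auto intro: order_trans[OF abs_ge_zero])
  then show ?thesis by (simp add: estimator_product_def x_def v_def abs_mult)
qed

lemma measurable_estimator_product:
  assumes "k \<ge> 1"
  shows "estimator_product k \<in> borel_measurable borel"
proof -
  have d: "0 < smoothing delta k" "smoothing delta k < dbar"
    using smoothing_bounds[OF assms delta(1)] delta by auto
  have "continuous_on UNIV (closest_point K)"
    using K K_closed K_nonempty by (intro continuous_on_closest_point) auto
  then have cK: "continuous_on UNIV (\<lambda>p::(real^'n) \<times> (real^'n). closest_point K (fst p))"
    by (rule continuous_on_compose2) (auto intro: continuous_intros)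
  have "continuous_on UNIV (\<lambda>p::(real^'n) \<times> (real^'n).
      F (cvec (closest_point K (fst p)) (smoothing delta k *\<^sub>R unit_clamp (snd p))))"
    by (rule continuous_on_query[OF cK _ continuous_on_snd[OF continuous_on_id] d])
      (use K K_closed K_nonempty closest_point_in_set in auto)
  then show ?thesis
    unfolding estimator_product_def
    by (intro borel_measurable_continuous_onI continuous_on_mult continuous_on_Im continuous_on_inner
        continuous_on_diff continuous_on_const cK continuous_on_compose2[OF continuous_on_unit_clamp
        continuous_on_snd[OF continuous_on_id]]) auto
qed

lemma measurable_alignment: "k \<ge> 1 \<Longrightarrow> alignment k \<in> borel_measurable M"
  unfolding alignment_def
  using measurable_iterate measurable_compose[OF measurable_direction
      borel_measurable_continuous_onI[OF continuous_on_unit_clamp]]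
  by measurable

lemma sq_dist_nonneg: "sq_dist k \<ge> 0"
  unfolding sq_dist_def by (rule integral_nonneg_AE) auto

lemma integrable_sq_dist: "k \<ge> 1 \<Longrightarrow> integrable M (\<lambda>\<omega>. (norm (iterate k \<omega> - xstar))\<^sup>2)"
proof -
  obtain R where R: "\<And>x. x \<in> K \<Longrightarrow> norm (x - xstar) \<le> R" using bounded_dist_xstar by blast
  assume "k \<ge> 1"
  then show ?thesis
    using R[OF iterate_in_K] measurable_iterate
    by (intro integrable_const_bound[of _ "R\<^sup>2"]) (auto intro!: power_mono)
qed

lemma integrable_f_iterate: "k \<ge> 1 \<Longrightarrow> integrable M (\<lambda>\<omega>. f (iterate k \<omega>))"
proof -
  obtain Bf where Bf: "\<And>x. x \<in> K \<Longrightarrow> \<bar>f x\<bar> \<le> Bf" using bounded_f_on_K by blast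
  assume "k \<ge> 1"
  then have "(\<lambda>\<omega>. f (iterate k \<omega>)) \<in> borel_measurable M"
    using measurable_f_closest_point[OF measurable_iterate] iterate_in_K by (simp add: closest_point_self)
  then show ?thesis using Bf[OF iterate_in_K] by (intro integrable_const_bound[of _ Bf]) auto
qed

lemma sq_dist_step_pointwise:
  assumes k: "k \<ge> 1" and B: "\<And>a b. a \<in> K \<Longrightarrow> norm b \<le> delta \<Longrightarrow> cmod (F (cvec a b)) \<le> B"
  shows "(norm (iterate (Suc k) \<omega> - xstar))\<^sup>2 \<le> (norm (iterate k \<omega> - xstar))\<^sup>2
      - 2 * stepsize k * estimator_scale k * (query k \<omega> * alignment k \<omega>)
      - 2 * stepsize k * estimator_scale k * (xi k \<omega> * alignment k \<omega>)
      + 2 * (stepsize k)\<^sup>2 * (estimator_scale k)\<^sup>2 * (B\<^sup>2 + (xi k \<omega>)\<^sup>2)"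
proof -
  define m c q where "m = stepsize k" and "c = estimator_scale k" and "q = query k \<omega>"
  define v where "v = m *\<^sub>R ((c * (q + xi k \<omega>)) *\<^sub>R unit_clamp (u k \<omega>))"
  have "v \<bullet> (iterate k \<omega> - xstar) = m * c * (q + xi k \<omega>) * alignment k \<omega>"
    by (simp add: v_def alignment_def)
  moreover have "(norm v)\<^sup>2 \<le> 2 * m\<^sup>2 * c\<^sup>2 * (B\<^sup>2 + (xi k \<omega>)\<^sup>2)"
  proof -
    have "(norm v)\<^sup>2 = m\<^sup>2 * c\<^sup>2 * (q + xi k \<omega>)\<^sup>2 * (norm (unit_clamp (u k \<omega>)))\<^sup>2"
      by (simp add: v_def power_mult_distrib)
    also have "\<dots> \<le> m\<^sup>2 * c\<^sup>2 * (q + xi k \<omega>)\<^sup>2"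
      using norm_unit_clamp[of "u k \<omega>"] by (intro mult_left_le) (auto simp: power_le_one)
    also have "\<dots> \<le> m\<^sup>2 * c\<^sup>2 * (2 * B\<^sup>2 + 2 * (xi k \<omega>)\<^sup>2)"
    proof (intro mult_left_mono)
      have "q\<^sup>2 \<le> B\<^sup>2" using power_mono[OF abs_query_le[OF k B, of \<omega>] abs_ge_zero, of 2] by (simp add: q_def)
      then show "(q + xi k \<omega>)\<^sup>2 \<le> 2 * B\<^sup>2 + 2 * (xi k \<omega>)\<^sup>2"
        using sum_squares_ge_zero[of "q - xi k \<omega>" 0] by (simp add: power2_eq_square algebra_simps)
    qed auto
    finally show ?thesis by (simp add: algebra_simps)
  qed
  ultimately show ?thesis
    using projected_step_sq_dist_le[OF K(3) K_closed K_nonempty xstar, of "iterate k \<omega>" v]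
    unfolding iterate_Suc[OF k] v_def[symmetric] m_def[symmetric] c_def[symmetric] q_def[symmetric]
    by (simp add: algebra_simps)
qed

lemma integrable_query_alignment:
  assumes k: "k \<ge> 1" and B: "\<And>a b. a \<in> K \<Longrightarrow> norm b \<le> delta \<Longrightarrow> cmod (F (cvec a b)) \<le> B"
    and R: "\<And>x. x \<in> K \<Longrightarrow> norm (x - xstar) \<le> R"
  shows "integrable M (\<lambda>\<omega>. query k \<omega> * alignment k \<omega>)"
proof (rule integrable_const_bound[of _ "B * R"])
  show "AE \<omega> in M. norm (query k \<omega> * alignment k \<omega>) \<le> B * R"
    using abs_estimator_product_le[OF k B R] by (simp add: estimator_product_iterate[symmetric])
  show "(\<lambda>\<omega>. query k \<omega> * alignment k \<omega>) \<in> borel_measurable M"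
    using measurable_compose[OF borel_measurable_Pair[OF measurable_iterate[OF k] measurable_direction[OF k]]
        measurable_estimator_product[OF k]]
    by (simp add: estimator_product_iterate)
qed

lemma integrable_noise_alignment:
  assumes k: "k \<ge> 1" and R: "\<And>x. x \<in> K \<Longrightarrow> norm (x - xstar) \<le> R"
  shows "integrable M (\<lambda>\<omega>. xi k \<omega> * alignment k \<omega>)"
proof (rule Bochner_Integration.integrable_bound[OF integrable_mult_right[OF xi_integrable[OF k], of R]])
  show "(\<lambda>\<omega>. xi k \<omega> * alignment k \<omega>) \<in> borel_measurable M"
    using xi_integrable[OF k] measurable_alignment[OF k] by auto
  have "\<bar>alignment k \<omega>\<bar> \<le> \<bar>R\<bar>" for \<omega> using alignment_bound[OF R, of k \<omega>] by simp
  then have "norm (xi k \<omega> * alignment k \<omega>) \<le> norm (R * xi k \<omega>)" for \<omega>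
    using mult_left_mono[of "\<bar>alignment k \<omega>\<bar>" "\<bar>R\<bar>" "\<bar>xi k \<omega>\<bar>"] by (simp add: abs_mult mult.commute)
  then show "AE \<omega> in M. norm (xi k \<omega> * alignment k \<omega>) \<le> norm (R * xi k \<omega>)" by simp
qed

lemma integral_noise_alignment:
  assumes k: "k \<ge> 1" and R: "\<And>x. x \<in> K \<Longrightarrow> norm (x - xstar) \<le> R"
  shows "(\<integral>\<omega>. xi k \<omega> * alignment k \<omega> \<partial>M) = 0"
proof -
  have "(\<lambda>p::(real^'n) \<times> (real^'n). unit_clamp (snd p) \<bullet> (fst p - xstar)) \<in> borel_measurable borel"
    by (intro borel_measurable_continuous_onI continuous_on_inner continuous_on_diff continuous_on_const
        continuous_on_fst continuous_on_id continuous_on_compose2[OF continuous_on_unit_clamp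
        continuous_on_snd[OF continuous_on_id]]) auto
  from indep_var_iterate_direction_noise[OF k this]
  have "indep_var borel (alignment k) borel (xi k)" by (simp add: alignment_def[abs_def])
  moreover have "integrable M (alignment k)"
    using measurable_alignment[OF k] alignment_bound[OF R] by (intro integrable_const_bound[of _ R]) auto
  ultimately have "(\<integral>\<omega>. alignment k \<omega> * xi k \<omega> \<partial>M) = (\<integral>\<omega>. alignment k \<omega> \<partial>M) * (\<integral>\<omega>. xi k \<omega> \<partial>M)"
    using xi_integrable[OF k] by (rule indep_var_lebesgue_integral)
  then show ?thesis using xi_mean[OF k] by (simp add: mult.commute)
qed

lemma sq_dist_Suc_le:
  assumes k: "k \<ge> 1" and B: "\<And>a b. a \<in> K \<Longrightarrow> norm b \<le> delta \<Longrightarrow> cmod (F (cvec a b)) \<le> B"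
    and R: "\<And>x. x \<in> K \<Longrightarrow> norm (x - xstar) \<le> R"
  shows "sq_dist (Suc k) \<le> sq_dist k - 2 * stepsize k * estimator_scale k * (\<integral>\<omega>. query k \<omega> * alignment k \<omega> \<partial>M)
           + 2 * (stepsize k)\<^sup>2 * (estimator_scale k)\<^sup>2 * (B\<^sup>2 + sigma)"
proof -
  let ?m = "stepsize k" and ?c = "estimator_scale k"
  note int_qW = integrable_query_alignment[OF k B R] and int_xiW = integrable_noise_alignment[OF k R]
  have int_sq: "integrable M (\<lambda>\<omega>. 2 * ?m\<^sup>2 * ?c\<^sup>2 * (B\<^sup>2 + (xi k \<omega>)\<^sup>2))"
    using xi_sq_integrable[OF k] by (intro integrable_mult_right Bochner_Integration.integrable_add) auto
  have "sq_dist (Suc k) \<le> (\<integral>\<omega>. (norm (iterate k \<omega> - xstar))\<^sup>2 - 2 * ?m * ?c * (query k \<omega> * alignment k \<omega>)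
      - 2 * ?m * ?c * (xi k \<omega> * alignment k \<omega>) + 2 * ?m\<^sup>2 * ?c\<^sup>2 * (B\<^sup>2 + (xi k \<omega>)\<^sup>2) \<partial>M)"
    unfolding sq_dist_def using integrable_sq_dist[OF k] int_qW int_xiW int_sq
    by (intro integral_mono sq_dist_step_pointwise[OF k B] integrable_sq_dist) auto
  also have "\<dots> = sq_dist k - 2 * ?m * ?c * (\<integral>\<omega>. query k \<omega> * alignment k \<omega> \<partial>M)
      + 2 * ?m\<^sup>2 * ?c\<^sup>2 * (B\<^sup>2 + (\<integral>\<omega>. (xi k \<omega>)\<^sup>2 \<partial>M))"
    using integrable_sq_dist[OF k] int_qW int_xiW xi_sq_integrable[OF k] integral_noise_alignment[OF k R]
      prob_space
    by (simp add: sq_dist_def)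
  finally have "sq_dist (Suc k) \<le> \<dots>" .
  moreover have "2 * ?m\<^sup>2 * ?c\<^sup>2 * (\<integral>\<omega>. (xi k \<omega>)\<^sup>2 \<partial>M) \<le> 2 * ?m\<^sup>2 * ?c\<^sup>2 * sigma"
    using xi_variance[OF k] by (intro mult_left_mono) auto
  ultimately show ?thesis by (simp add: algebra_simps)
qed

lemma estimator_correlation_at:
  assumes k: "k \<ge> 1" and x: "x \<in> K"
    and remainder: "\<forall>x\<in>K. \<forall>y. norm y \<le> 1 \<longrightarrow> (\<forall>t. 0 < t \<and> t \<le> delta \<longrightarrow>
      \<bar>Im (F (cvec x (t *\<^sub>R y))) - t * (grad f x \<bullet> y)\<bar> \<le> C * t ^ 3)"
  shows "f x - f xstar + tau / 2 * (norm (x - xstar))\<^sup>2 - real CARD('n) * C * (smoothing delta k)\<^sup>2 * norm (x - xstar)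
      \<le> (\<integral>y. estimator_scale k * estimator_product k (x, y) \<partial>uniform_sphere)"
proof -
  define d where "d = smoothing delta k"
  have d: "0 < d" "d \<le> delta" "d < dbar" using smoothing_bounds[OF k delta(1)] delta by (auto simp: d_def)
  have "f xstar \<ge> f x + grad f x \<bullet> (xstar - x) + tau / 2 * (norm (xstar - x))\<^sup>2"
    using strongly_convex x xstar K(1) unfolding strongly_convex_on_def by blast
  then have "f x - f xstar + tau / 2 * (norm (x - xstar))\<^sup>2 - real CARD('n) * C * d\<^sup>2 * norm (x - xstar)
      \<le> grad f x \<bullet> (x - xstar) - real CARD('n) * C * d\<^sup>2 * norm (x - xstar)"
    by (simp add: inner_diff_right norm_minus_commute)
  also have "\<dots> \<le> (\<integral>y. (real CARD('n) / d) * Im (F (cvec x (d *\<^sub>R unit_clamp y))) * (unit_clamp y \<bullet> (x - xstar))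
      \<partial>uniform_sphere)"
    using remainder x d by (intro complex_step_estimator_correlation[OF _ d(1,3)]) (auto simp: K(1)[THEN subsetD])
  also have "\<dots> = (\<integral>y. estimator_scale k * estimator_product k (x, y) \<partial>uniform_sphere)"
    using x by (simp add: estimator_product_def estimator_scale_def d_def closest_point_self mult.assoc)
  finally show ?thesis by (simp add: d_def)
qed

lemma correlation_lower_bound:
  assumes k: "k \<ge> 1"
    and remainder: "\<forall>x\<in>K. \<forall>y. norm y \<le> 1 \<longrightarrow> (\<forall>t. 0 < t \<and> t \<le> delta \<longrightarrow>
      \<bar>Im (F (cvec x (t *\<^sub>R y))) - t * (grad f x \<bullet> y)\<bar> \<le> C * t ^ 3)"
    and B: "\<And>a b. a \<in> K \<Longrightarrow> norm b \<le> delta \<Longrightarrow> cmod (F (cvec a b)) \<le> B"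
    and R: "\<And>x. x \<in> K \<Longrightarrow> norm (x - xstar) \<le> R"
  shows "gap k + tau / 4 * sq_dist k - (real CARD('n) * C * (smoothing delta k)\<^sup>2)\<^sup>2 / tau
      \<le> estimator_scale k * (\<integral>\<omega>. query k \<omega> * alignment k \<omega> \<partial>M)"
proof -
  define c b where "c = estimator_scale k" and "b = real CARD('n) * C * (smoothing delta k)\<^sup>2"
  obtain Bf where Bf: "\<And>x. x \<in> K \<Longrightarrow> \<bar>f x\<bar> \<le> Bf" using bounded_f_on_K by blast
  define L where "L x = f (closest_point K x) - f xstar + tau / 2 * (norm (closest_point K x - xstar))\<^sup>2
      - b * norm (closest_point K x - xstar)" for x
  have cK: "closest_point K x \<in> K" for x using closest_point_in_set[OF K_closed K_nonempty] .
  have "(\<lambda>p. c * estimator_product k p) \<in> borel_measurable borel"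
    using measurable_estimator_product[OF k] by measurable
  moreover have "\<bar>c * estimator_product k p\<bar> \<le> \<bar>c\<bar> * (B * R)" for p
    using abs_estimator_product_le[OF k B R, of p] by (simp add: abs_mult mult_left_mono)
  moreover have L_meas: "L \<in> borel_measurable borel"
    unfolding L_def using borel_measurable_continuous_onI[OF continuous_on_f_closest_point]
    by (intro borel_measurable_continuous_onI continuous_intros continuous_on_f_closest_point
        continuous_on_closest_point) (use K K_closed K_nonempty in auto)
  moreover have L_bound: "\<bar>L x\<bar> \<le> Bf + \<bar>f xstar\<bar> + tau / 2 * R\<^sup>2 + \<bar>b\<bar> * R" for x
  proof -
    have r: "norm (closest_point K x - xstar) \<le> R" by (rule R[OF cK])
    then have "\<bar>tau / 2 * (norm (closest_point K x - xstar))\<^sup>2\<bar> \<le> tau / 2 * R\<^sup>2"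
      using tau_pos by (simp add: power_mono)
    moreover have "\<bar>b * norm (closest_point K x - xstar)\<bar> \<le> \<bar>b\<bar> * R"
      using r by (simp add: abs_mult mult_left_mono)
    ultimately show ?thesis using Bf[OF cK[of x]] unfolding L_def abs_le_iff by linarith
  qed
  moreover have "L x \<le> (\<integral>y. c * estimator_product k (x, y) \<partial>distr M borel (u k))" if "x \<in> K" for x
    using estimator_correlation_at[OF k that remainder] that
    by (simp add: L_def b_def c_def u_uniform[OF k] closest_point_self)
  ultimately have "(\<integral>\<omega>. L (iterate k \<omega>) \<partial>M) \<le> (\<integral>\<omega>. c * estimator_product k (iterate k \<omega>, u k \<omega>) \<partial>M)"
    using iterate_in_K
    by (intro integral_indep_var_lower_bound[where S = K, OF prob_space_axioms indep_var_iterate_direction[OF k]])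
      auto
  also have "\<dots> = c * (\<integral>\<omega>. query k \<omega> * alignment k \<omega> \<partial>M)"
    by (simp add: estimator_product_iterate)
  finally have upper: "(\<integral>\<omega>. L (iterate k \<omega>) \<partial>M) \<le> c * (\<integral>\<omega>. query k \<omega> * alignment k \<omega> \<partial>M)" .
  have "gap k + tau / 4 * sq_dist k - b\<^sup>2 / tau
      = (\<integral>\<omega>. f (iterate k \<omega>) - f xstar + tau / 4 * (norm (iterate k \<omega> - xstar))\<^sup>2 - b\<^sup>2 / tau \<partial>M)"
    using integrable_f_iterate[OF k] integrable_sq_dist[OF k] prob_space by (simp add: gap_def sq_dist_def)
  also have "\<dots> \<le> (\<integral>\<omega>. L (iterate k \<omega>) \<partial>M)"
  proof (rule integral_mono)
    show "integrable M (\<lambda>\<omega>. f (iterate k \<omega>) - f xstar + tau / 4 * (norm (iterate k \<omega> - xstar))\<^sup>2 - b\<^sup>2 / tau)"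
      by (intro Bochner_Integration.integrable_diff Bochner_Integration.integrable_add integrable_mult_right
          integrable_f_iterate[OF k] integrable_sq_dist[OF k] integrable_const)
    show "integrable M (\<lambda>\<omega>. L (iterate k \<omega>))"
      using L_bound measurable_compose[OF measurable_iterate[OF k] L_meas]
      by (intro integrable_const_bound[of _ "Bf + \<bar>f xstar\<bar> + tau / 2 * R\<^sup>2 + \<bar>b\<bar> * R"]) auto
    show "f (iterate k \<omega>) - f xstar + tau / 4 * (norm (iterate k \<omega> - xstar))\<^sup>2 - b\<^sup>2 / tau \<le> L (iterate k \<omega>)"
      for \<omega>
      using mult_le_quarter_square_add[OF tau_pos, of b "norm (iterate k \<omega> - xstar)"] iterate_in_K
      by (simp add: L_def closest_point_self)
  qed
  finally show ?thesis using upper by (simp add: b_def c_def)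
qed

lemma descent_inequality:
  obtains A where "A \<ge> 0"
    "\<And>k. k \<ge> 1 \<Longrightarrow> gap k \<le> tau / 4 * ((real k - 1) * sq_dist k - real k * sq_dist (Suc k)) + A * real k powr (-2/3)"
proof -
  obtain C where C: "\<forall>x\<in>K. \<forall>y. norm y \<le> 1 \<longrightarrow> (\<forall>t. 0 < t \<and> t \<le> delta \<longrightarrow>
      \<bar>Im (F (cvec x (t *\<^sub>R y))) - t * (grad f x \<bullet> y)\<bar> \<le> C * t ^ 3)"
    using complex_step_remainder[OF K(2,1) K_nonempty delta(2)] by blast
  obtain B where B: "\<And>a b. a \<in> K \<Longrightarrow> norm b \<le> delta \<Longrightarrow> cmod (F (cvec a b)) \<le> B"
    using bounded_F_near_K by blast
  obtain R where R: "\<And>x. x \<in> K \<Longrightarrow> norm (x - xstar) \<le> R" using bounded_dist_xstar by blast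
  have sigma: "sigma \<ge> 0" using order_trans[OF integral_nonneg_AE xi_variance[of 1]] by simp
  define n where "n = real CARD('n)"
  define A where "A = n\<^sup>2 * C\<^sup>2 * delta ^ 4 / tau + 2 * n\<^sup>2 * (B\<^sup>2 + sigma) / (tau * delta\<^sup>2)"
  have "A \<ge> 0" using tau_pos delta sigma by (simp add: A_def)
  moreover have "gap k \<le> tau / 4 * ((real k - 1) * sq_dist k - real k * sq_dist (Suc k)) + A * real k powr (-2/3)"
    if k: "k \<ge> 1" for k
  proof -
    define m c b E where "m = stepsize k" and "c = estimator_scale k" and "b = n * C * (smoothing delta k)\<^sup>2"
      and "E = (\<integral>\<omega>. query k \<omega> * alignment k \<omega> \<partial>M)"
    have m: "m > 0" using tau_pos k by (simp add: m_def stepsize_def)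
    have "sq_dist (Suc k) \<le> sq_dist k - 2 * m * c * E + 2 * m\<^sup>2 * c\<^sup>2 * (B\<^sup>2 + sigma)"
      using sq_dist_Suc_le[OF k B R] by (simp add: m_def c_def E_def)
    moreover have "gap k + tau / 4 * sq_dist k - b\<^sup>2 / tau \<le> c * E"
      using correlation_lower_bound[OF k C B R] by (simp add: b_def c_def E_def n_def)
    ultimately have "2 * m * gap k \<le> sq_dist k - sq_dist (Suc k) - m * tau / 2 * sq_dist k
        + 2 * m * (b\<^sup>2 / tau + m * c\<^sup>2 * (B\<^sup>2 + sigma))"
      using mult_left_mono[of _ _ "2 * m"] m by (fastforce simp: algebra_simps power2_eq_square)
    then have "gap k \<le> (sq_dist k - sq_dist (Suc k) - m * tau / 2 * sq_dist k) / (2 * m)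
        + (b\<^sup>2 / tau + m * c\<^sup>2 * (B\<^sup>2 + sigma))"
      using m by (simp add: field_simps)
    also have "(sq_dist k - sq_dist (Suc k) - m * tau / 2 * sq_dist k) / (2 * m)
        = tau / 4 * ((real k - 1) * sq_dist k - real k * sq_dist (Suc k))"
      using tau_pos k by (simp add: m_def stepsize_def field_simps)
    also have "b\<^sup>2 / tau + m * c\<^sup>2 * (B\<^sup>2 + sigma) = A * real k powr (-2/3)"
      unfolding A_def b_def m_def c_def stepsize_def estimator_scale_def smoothing_def n_def
      by (rule smoothing_schedule_balance[OF k delta(1) tau_pos])
    finally show ?thesis .
  qed
  ultimately show thesis using that by blast
qed

lemma average_iterate_in_K: "N \<ge> 1 \<Longrightarrow> (1 / real N) *\<^sub>R (\<Sum>k=1..N. iterate k \<omega>) \<in> K"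
  using convex_sum[OF _ K(3), of "{1..N}" "\<lambda>_. 1 / real N" "\<lambda>k. iterate k \<omega>"] iterate_in_K
  by (simp add: scaleR_sum_right)

lemma measurable_average_gap:
  assumes "N \<ge> 1"
  shows "(\<lambda>\<omega>. f ((1 / real N) *\<^sub>R (\<Sum>k=1..N. iterate k \<omega>)) - f xstar) \<in> borel_measurable M"
proof -
  have "(\<lambda>\<omega>. (1 / real N) *\<^sub>R (\<Sum>k=1..N. iterate k \<omega>)) \<in> borel_measurable M"
    using measurable_iterate by (intro borel_measurable_scaleR borel_measurable_const borel_measurable_sum) auto
  from measurable_f_closest_point[OF this] show ?thesis
    using average_iterate_in_K[OF assms] by (simp add: closest_point_self)
qed

lemma average_gap_bound:
  obtains A where "A \<ge> 0"
    "\<And>N. N \<ge> 1 \<Longrightarrow> (\<integral>\<omega>. f ((1 / real N) *\<^sub>R (\<Sum>k=1..N. iterate k \<omega>)) - f xstar \<partial>M) \<le> A * real N powr (-2/3)"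
proof -
  obtain A where A: "A \<ge> 0"
    "\<And>k. k \<ge> 1 \<Longrightarrow> gap k \<le> tau / 4 * ((real k - 1) * sq_dist k - real k * sq_dist (Suc k)) + A * real k powr (-2/3)"
    using descent_inequality by blast
  obtain Bf where Bf: "\<And>x. x \<in> K \<Longrightarrow> \<bar>f x\<bar> \<le> Bf" using bounded_f_on_K by blast
  have "(\<integral>\<omega>. f ((1 / real N) *\<^sub>R (\<Sum>k=1..N. iterate k \<omega>)) - f xstar \<partial>M) \<le> 3 * A * real N powr (-2/3)"
    if N: "N \<ge> 1" for N
  proof -
    have "\<bar>f ((1 / real N) *\<^sub>R (\<Sum>k=1..N. iterate k \<omega>)) - f xstar\<bar> \<le> Bf + \<bar>f xstar\<bar>" for \<omega>
      using Bf[OF average_iterate_in_K[OF N, of \<omega>]]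
        abs_triangle_ineq4[of "f ((1 / real N) *\<^sub>R (\<Sum>k=1..N. iterate k \<omega>))" "f xstar"] by linarith
    then have int_avg: "integrable M (\<lambda>\<omega>. f ((1 / real N) *\<^sub>R (\<Sum>k=1..N. iterate k \<omega>)) - f xstar)"
      using measurable_average_gap[OF N] by (intro integrable_const_bound[of _ "Bf + \<bar>f xstar\<bar>"]) auto
    have int_sum: "integrable M (\<lambda>\<omega>. (1 / real N) * (\<Sum>k=1..N. f (iterate k \<omega>) - f xstar))"
      using integrable_f_iterate
      by (intro integrable_mult_right Bochner_Integration.integrable_sum Bochner_Integration.integrable_diff) auto
    have "(\<integral>\<omega>. f ((1 / real N) *\<^sub>R (\<Sum>k=1..N. iterate k \<omega>)) - f xstar \<partial>M)
        \<le> (\<integral>\<omega>. (1 / real N) * (\<Sum>k=1..N. f (iterate k \<omega>) - f xstar) \<partial>M)"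
    proof (rule integral_mono[OF int_avg int_sum])
      fix \<omega>
      have "f ((1 / real N) *\<^sub>R (\<Sum>k=1..N. iterate k \<omega>)) \<le> (1 / real N) * (\<Sum>k=1..N. f (iterate k \<omega>))"
        by (rule strongly_convex_on_mean_le[OF strongly_convex _ K(3,1)]) (use tau_pos iterate_in_K N in auto)
      moreover have "(1 / real N) * (\<Sum>k=1..N. f (iterate k \<omega>) - f xstar)
          = (1 / real N) * (\<Sum>k=1..N. f (iterate k \<omega>)) - f xstar"
        using N by (simp add: sum_subtractf right_diff_distrib)
      ultimately show "f ((1 / real N) *\<^sub>R (\<Sum>k=1..N. iterate k \<omega>)) - f xstar
          \<le> (1 / real N) * (\<Sum>k=1..N. f (iterate k \<omega>) - f xstar)"
        by linarith
    qed
    also have "\<dots> = (1 / real N) * (\<integral>\<omega>. (\<Sum>k=1..N. f (iterate k \<omega>) - f xstar) \<partial>M)"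
      by simp
    also have "(\<integral>\<omega>. (\<Sum>k=1..N. f (iterate k \<omega>) - f xstar) \<partial>M) = (\<Sum>k=1..N. gap k)"
      unfolding gap_def by (rule Bochner_Integration.integral_sum) (use integrable_f_iterate in auto)
    also have "(1 / real N) * (\<Sum>k=1..N. gap k) \<le> (1 / real N) * (3 * A * real N powr (1/3))"
      using sum_le_of_weighted_recursion[OF A(2) _ A(1) sq_dist_nonneg, of N] tau_pos
      by (intro mult_left_mono) auto
    also have "\<dots> = 3 * A * real N powr (-2/3)"
    proof -
      have "real N powr (-2/3) = real N powr (1/3 - 1)" by simp
      also have "\<dots> = real N powr (1/3) / real N powr 1" by (rule powr_diff)
      also have "\<dots> = real N powr (1/3) / real N" using N by simp
      finally show ?thesis by simp
    qed
    finally show ?thesis .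
  qed
  moreover have "3 * A \<ge> 0" using A(1) by simp
  ultimately show thesis using that by blast
qed

lemma AE_eq_iterate:
  assumes init: "\<And>\<omega>. x 1 \<omega> = x1"
    and step: "\<And>k \<omega>. k \<ge> 1 \<Longrightarrow> x (Suc k) \<omega> = closest_point K (x k \<omega> - (2 / (tau * real k)) *\<^sub>R
      ((real CARD('n) / (delta * real k powr (-1/6))) *
        (Im (F (cvec (x k \<omega>) ((delta * real k powr (-1/6)) *\<^sub>R u k \<omega>))) + xi k \<omega>)) *\<^sub>R u k \<omega>)"
  shows "AE \<omega> in M. \<forall>k\<ge>1. x k \<omega> = iterate k \<omega>"
proof -
  have "AE \<omega> in M. norm (u k \<omega>) \<le> 1" if k: "k \<ge> 1" for k
  proof -
    have "AE y in distr M borel (u k). norm y \<le> 1"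
      unfolding u_uniform[OF k] using AE_uniform_sphere_norm by eventually_elim simp
    then show ?thesis by (subst (asm) AE_distr_iff[OF measurable_direction[OF k]]) auto
  qed
  then have "AE \<omega> in M. \<forall>k\<ge>1. norm (u k \<omega>) \<le> 1"
    by (subst AE_all_countable) (auto intro: AE_I2)
  then show ?thesis
  proof eventually_elim
    case (elim \<omega>)
    show ?case
    proof (intro allI impI)
      fix k :: nat assume "k \<ge> 1"
      then show "x k \<omega> = iterate k \<omega>"
      proof (induction k rule: dec_induct)
        case base then show ?case by (metis One_nat_def init iterate_one)
      next
        case (step k)
        then have "unit_clamp (u k \<omega>) = u k \<omega>" using elim by (simp add: unit_clamp_eq)
        with step show ?case
          by (simp add: assms(2) iterate_Suc query_def stepsize_def estimator_scale_def smoothing_def)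
      qed
    qed
  qed
qed

end

theorem mainTheorem3:
  fixes f :: "real^'n \<Rightarrow> real"
    and D K :: "(real^'n) set"
    and F :: "complex^'n \<Rightarrow> complex"
    and tau L2 dbar kappa delta sigma :: real
    and M :: "'a measure"
    and u :: "nat \<Rightarrow> 'a \<Rightarrow> real^'n"
    and xi :: "nat \<Rightarrow> 'a \<Rightarrow> real"
    and x :: "nat \<Rightarrow> 'a \<Rightarrow> real^'n"
    and x1 xstar :: "real^'n"
  assumes D_open: "open D"
    and f_analytic: "real_analytic_vec_on f D"
    and tau_pos: "tau > 0"
    and f_sconv: "strongly_convex_on D tau f"
    and dbar: "0 < dbar" "dbar < 1"
    and F_holo: "holomorphic_vec_on F (strip D dbar)"
    and F_ext: "\<forall>z\<in>D. F (cvec z 0) = complex_of_real (f z)"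
    and K_sub: "K \<subseteq> D" and K_compact: "compact K" and K_convex: "convex K"
    and L2_ne: "L2 \<noteq> 0"
    and hess_lip: "\<forall>y\<in>K. \<forall>z\<in>K. mat_norm2 (hessian f y - hessian f z) \<le> L2 * norm (y - z)"
    and kappa: "0 < kappa" "kappa < 1"
    and delta: "0 < delta" "delta \<le> kappa * dbar"
    and sigma_pos: "sigma > 0"
    and M_prob: "prob_space M"
    and u_rv: "\<forall>k\<ge>1. u k \<in> borel_measurable M"
    and u_unif: "\<forall>k\<ge>1. distr M borel (u k) = uniform_sphere"
    and xi_rv: "\<forall>k\<ge>1. xi k \<in> borel_measurable M"
    and xi_int: "\<forall>k\<ge>1. integrable M (xi k)"
    and xi_mean: "\<forall>k\<ge>1. (\<integral>\<omega>. xi k \<omega> \<partial>M) = 0"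
    and xi_sq_int: "\<forall>k\<ge>1. integrable M (\<lambda>\<omega>. (xi k \<omega>)\<^sup>2)"
    and xi_var: "\<forall>k\<ge>1. (\<integral>\<omega>. (xi k \<omega>)\<^sup>2 \<partial>M) \<le> sigma"
    and indep: "prob_space.indep_vars M (\<lambda>_. borel)
        (\<lambda>i \<omega>. case i of Inl k \<Rightarrow> (u k \<omega>, 0) | Inr k \<Rightarrow> (0, xi k \<omega>))
        ({1..} <+> {1..})"
    and x1_in: "x1 \<in> K"
    and x_init: "\<forall>\<omega>. x 1 \<omega> = x1"
    and x_step: "\<forall>k\<ge>1. \<forall>\<omega>.
        x (Suc k) \<omega> = closest_point K
          (x k \<omega> - (2 / (tau * real k)) *\<^sub>R
             ((real CARD('n) / (delta * real k powr (-1/6))) *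
               (Im (F (cvec (x k \<omega>) ((delta * real k powr (-1/6)) *\<^sub>R u k \<omega>))) + xi k \<omega>))
             *\<^sub>R u k \<omega>)"
    and xstar_min: "xstar \<in> K" "\<forall>y\<in>K. f xstar \<le> f y"
  shows "\<exists>C p. \<forall>Kn::nat\<ge>1.
     (\<integral>\<omega>. f ((1 / real Kn) *\<^sub>R (\<Sum>k=1..Kn. x k \<omega>)) - f xstar \<partial>M)
       \<le> C * (1 + ln (real Kn)) ^ p *
          (real CARD('n) ^ 2 / tau * delta powr (-1/3) * sigma * real Kn powr (-2/3))"
proof -
  have "delta < dbar" using delta mult_strict_right_mono[OF kappa(2) dbar(1)] by simp
  then interpret complex_step_sgd f F D dbar M K tau delta sigma xstar x1 u xi
    using D_open dbar(1) F_holo F_ext M_prob tau_pos f_sconv K_sub K_compact K_convex xstar_min(1) x1_in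
      delta(1) u_unif xi_int xi_mean xi_sq_int xi_var indep
    by (intro complex_step_sgd.intro holomorphic_extension.intro complex_step_sgd_axioms.intro) simp_all
  obtain A where A: "A \<ge> 0"
    "\<And>N. N \<ge> 1 \<Longrightarrow> (\<integral>\<omega>. f ((1 / real N) *\<^sub>R (\<Sum>k=1..N. iterate k \<omega>)) - f xstar \<partial>M) \<le> A * real N powr (-2/3)"
    using average_gap_bound by blast
  have x_eq: "AE \<omega> in M. \<forall>k\<ge>1. x k \<omega> = iterate k \<omega>"
    by (rule AE_eq_iterate) (use x_init x_step in auto)
  define S where "S = real CARD('n) ^ 2 / tau * delta powr (-1/3) * sigma"
  have S: "S > 0" using tau_pos delta(1) sigma_pos by (simp add: S_def)
  show ?thesis
  proof (intro exI[of _ "A / S"] exI[of _ "0::nat"] allI impI)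
    fix N :: nat assume N: "N \<ge> 1"
    have "(\<integral>\<omega>. f ((1 / real N) *\<^sub>R (\<Sum>k=1..N. x k \<omega>)) - f xstar \<partial>M) \<le> A * real N powr (-2/3)"
      using x_eq
      by (intro integral_le_if_AE_eq[OF _ measurable_average_gap[OF N] A(2)[OF N]])
        (auto elim!: eventually_mono intro!: sum.cong simp: A(1))
    then show "(\<integral>\<omega>. f ((1 / real N) *\<^sub>R (\<Sum>k=1..N. x k \<omega>)) - f xstar \<partial>M)
       \<le> A / S * (1 + ln (real N)) ^ 0 *
          (real CARD('n) ^ 2 / tau * delta powr (-1/3) * sigma * real N powr (-2/3))"
      unfolding S_def[symmetric] using S by simp
  qed
qed

end
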